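(* Let $n\ge N\ge 2$, let $0<q<1$, let $p>0$ be real, and let $t^{1/2}$ be a nonzero complex number. Let $\mathbf f=\{f_\epsilon\}_{\epsilon\in I_{d_0,\dots,d_{N-1}}}$ be a qKZ family of sign $(+)$ (resp. $(-)$) with exponents $(c_0,\dots,c_{N-1})$, where in the plus case $q=t^{1/2}$ and in the minus case $q=-t^{-1/2}$. Fix an $N$-th root $C$ of $\prod_{l=0}^{N-1}c_l$. Let $\alpha,\beta,h,K,F,G$ be as defined in the context (according to the sign). Then $G(z_1,\dots,z_n)=K(z_1,\dots,z_n)F(z_1,\dots,z_n)$ is a solution of the qKZ equation with difference step $p$ and parameters $$\kappa_j=\Big(\prod_{l=0}^{j-1}c_l\Big)\,C^{-j}\qquad(j=1,\dots,N-1).$$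
   Context: Notation: $P_n=\mathbb{C}[z_1^{\pm1},\dots,z_n^{\pm1}]$. For $1\le i\le n-1$, $\tau_i$ swaps $z_i$ and $z_{i+1}$; the Demazure–Lusztig operator on $P_n$ is $\widehat T_i:=t^{1/2}\tau_i+\frac{t^{1/2}-t^{-1/2}}{z_i/z_{i+1}-1}(\tau_i-1)$, and $(\omega f)(z_1,\dots,z_n):=f(pz_n,z_1,\dots,z_{n-1})$. For positive integers $d_0,\dots,d_{N-1}$ with $\sum_j d_j=n$, $I_{d_0,\dots,d_{N-1}}$ is the set of $\epsilon=(\epsilon_1,\dots,\epsilon_n)\in\{0,\dots,N-1\}^n$ with $\#\{a:\epsilon_a=j\}=d_j$ for all $j$. A family $\{f_\epsilon\in P_n\}_{\epsilon\in I_{d_0,\dots,d_{N-1}}}$ is a qKZ family of sign $(+)$ (resp. $(-)$) with exponents $(c_0,\dots,c_{N-1})$ if: (i) whenever $\epsilon_i=\epsilon_{i+1}$, $\widehat T_if_\epsilon=t^{1/2}f_\epsilon$ (resp. $\widehat T_if_\epsilon=-t^{-1/2}f_\epsilon$); (ii) whenever $\epsilon_i>\epsilon_{i+1}$, $\widehat T_if_{(\dots,\epsilon_i,\epsilon_{i+1},\dots)}=f_{(\dots,\epsilon_{i+1},\epsilon_i,\dots)}$; (iii) $\omega f_{(\epsilon_n,\epsilon_1,\dots,\epsilon_{n-1})}=c_{\epsilon_n}f_{(\epsilon_1,\dots,\epsilon_n)}$ for all $\epsilon$. (The formulas below require $\prod_l c_l\ne0$.) qKZ equation: $V=\bigoplus_{\epsilon=0}^{N-1}\mathbb{C}v_\epsilon$.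 Define $\bar R(z)\in\mathrm{End}(V\otimes V)$ by $\bar R(z)(v_i\otimes v_i)=v_i\otimes v_i$ and, for $i\ne j$, $\bar R(z)(v_i\otimes v_j)=\frac{(1-z)q}{1-q^2z}v_i\otimes v_j+\frac{(1-q^2)z^{\theta(j>i)}}{1-q^2z}v_j\otimes v_i$, where $\theta(P)=1$ if $P$ is true and $0$ otherwise. Let $(z;x)_\infty=\prod_{j\ge0}(1-x^jz)$, $r(z)=q^{\frac1N-1}\frac{(q^2z;q^{2N})_\infty(q^{2N-2}z;q^{2N})_\infty}{(z;q^{2N})_\infty(q^{2N}z;q^{2N})_\infty}$ and $R(z)=r(z)\bar R(z)$. For $m\ne l$, $R_{m,l}(z)$ acts on $V^{\otimes n}$ as $R(z)$ with its first tensor slot on the $m$-th factor and second slot on the $l$-th factor. For $\kappa_1,\dots,\kappa_{N-1}$, the operator $\prod_{j=1}^{N-1}\kappa_j^{h_j}$ on $V$ acts by $v_i\mapsto \kappa_{i+1}\kappa_i^{-1}v_i$ (with $\kappa_0=\kappa_N=1$), and $(\cdot)_m$ means acting on the $m$-th factor. A $V^{\otimes n}$-valued function $G$ solves the qKZ equation (difference step $p$, parameters $\kappa_j$) if for all $m=1,\dots,n$: $G(z_1,\dots,pz_m,\dots,z_n)=R_{m,m-1}(pz_m/z_{m-1})\cdots R_{m,1}(pz_m/z_1)\,(\prod_j\kappa_j^{h_j})_m\,R_{n,m}(z_n/z_m)^{-1}\cdots R_{m+1,m}(z_{m+1}/z_m)^{-1}G(z_1,\dots,z_n)$. Construction: In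 the plus case, $\alpha,\beta$ are given by $p^\alpha=C^{-1}q^{-(n+1)(1/N-1)}$, $p^\beta=q^{2(1/N-1)}$, and $h$ is any function with $\frac{h(p^{-1}z)}{h(z)}=\frac{(z;q^{2N})_\infty(q^{2N}z;q^{2N})_\infty}{(q^2z;q^{2N})_\infty(q^{2N-2}z;q^{2N})_\infty}$. In the minus case, $p^\alpha=(-1)^{n-1}C^{-1}q^{-(n+1)(1+1/N)}$, $p^\beta=q^{2(1+1/N)}$, and $h$ is any function with $\frac{h(p^{-1}z)}{h(z)}=\frac{(z;q^{2N})_\infty(q^{2N}z;q^{2N})_\infty}{(q^{2(N+1)}z;q^{2N})_\infty(q^{-2}z;q^{2N})_\infty}$. Then $K(z_1,\dots,z_n)=\prod_{a=1}^nz_a^{\alpha+\beta a}\prod_{1\le a<b\le n}h(z_b/z_a)$, $F=\sum_{\epsilon\in I_{d_0,\dots,d_{N-1}}}f_\epsilon\,v_{\epsilon_1}\otimes\cdots\otimes v_{\epsilon_n}$, and $G=KF$. *)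

theory Defs
  imports "HOL-Analysis.Analysis"
begin

text \<open>Variables z are represented as functions nat \<Rightarrow> complex, coordinate
  z a (0-based, a < n) being the paper's z_(a+1).  Indices of sequences epsilon are lists of
  length n; position i of the list is the paper's epsilon_(i+1).  A vector in V^(tensor n) is a
  function nat list \<Rightarrow> complex giving the coefficient of the basis vector
  v_(e!0) \<otimes> ... \<otimes> v_(e!(n-1)); it vanishes off the index set tidx n N.\<close>

definition laurent_poly :: "nat \<Rightarrow> ((nat \<Rightarrow> complex) \<Rightarrow> complex) \<Rightarrow> bool" where
  "laurent_poly n f \<longleftrightarrow>
     (\<exists>(A :: (nat \<Rightarrow> int) set) (cf :: (nat \<Rightarrow> int) \<Rightarrow> complex). finite A \<and>
        (\<forall>z. f z = (\<Sum>e\<in>A. cf e * (\<Prod>i<n. z i powi e i))))"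

definition swapz :: "nat \<Rightarrow> (nat \<Rightarrow> complex) \<Rightarrow> (nat \<Rightarrow> complex)" where
  "swapz i z = z(i := z (Suc i), Suc i := z i)"

text \<open>Demazure--Lusztig operator (0-based index i acts on coordinates i, i+1);
  t12 is t^(1/2).  The formula is used pointwise where z i \<noteq> z (i+1).\<close>
definition DL :: "complex \<Rightarrow> nat \<Rightarrow> ((nat \<Rightarrow> complex) \<Rightarrow> complex) \<Rightarrow> (nat \<Rightarrow> complex) \<Rightarrow> complex" where
  "DL t12 i f z = t12 * f (swapz i z)
      + (t12 - inverse t12) / (z i / z (Suc i) - 1) * (f (swapz i z) - f z)"

definition omega :: "real \<Rightarrow> nat \<Rightarrow> ((nat \<Rightarrow> complex) \<Rightarrow> complex) \<Rightarrow> (nat \<Rightarrow> complex) \<Rightarrow> complex" where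
  "omega p n f z = f (\<lambda>k. if k = 0 then of_real p * z (n - 1) else if k < n then z (k - 1) else z k)"

definition Iset :: "nat \<Rightarrow> nat \<Rightarrow> (nat \<Rightarrow> nat) \<Rightarrow> nat list set" where
  "Iset n N d = {e. length e = n \<and> set e \<subseteq> {..<N} \<and> (\<forall>j<N. count_list e j = d j)}"

definition torus :: "nat \<Rightarrow> (nat \<Rightarrow> complex) \<Rightarrow> bool" where
  "torus n z \<longleftrightarrow> (\<forall>a<n. z a \<noteq> 0)"

text \<open>qKZ family of sign (+) (pos = True) or (-) (pos = False) with exponents c.\<close>
definition qKZ_family :: "bool \<Rightarrow> complex \<Rightarrow> real \<Rightarrow> nat \<Rightarrow> nat \<Rightarrow> (nat \<Rightarrow> nat) \<Rightarrow> (nat \<Rightarrow> complex)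
    \<Rightarrow> (nat list \<Rightarrow> (nat \<Rightarrow> complex) \<Rightarrow> complex) \<Rightarrow> bool" where
  "qKZ_family pos t12 p n N d c f \<longleftrightarrow>
     (\<forall>e\<in>Iset n N d. laurent_poly n (f e)) \<and>
     (\<forall>e\<in>Iset n N d. \<forall>i. Suc i < n \<and> e ! i = e ! Suc i \<longrightarrow>
        (\<forall>z. torus n z \<and> z i \<noteq> z (Suc i) \<longrightarrow>
           DL t12 i (f e) z = (if pos then t12 else - inverse t12) * f e z)) \<and>
     (\<forall>e\<in>Iset n N d. \<forall>i. Suc i < n \<and> e ! i > e ! Suc i \<longrightarrow>
        (\<forall>z. torus n z \<and> z i \<noteq> z (Suc i) \<longrightarrow>
           DL t12 i (f e) z = f (e[i := e ! Suc i, Suc i := e ! i]) z)) \<and>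
     (\<forall>e\<in>Iset n N d. \<forall>z. torus n z \<longrightarrow>
        omega p n (f (last e # butlast e)) z = c (last e) * f e z)"

definition qpoch :: "complex \<Rightarrow> complex \<Rightarrow> complex" where
  "qpoch z x = (\<Prod>j. 1 - x ^ j * z)"

definition rfun :: "real \<Rightarrow> nat \<Rightarrow> complex \<Rightarrow> complex" where
  "rfun q N w = of_real (q powr (1 / real N - 1)) *
     (qpoch (of_real q ^ 2 * w) (of_real q ^ (2*N)) * qpoch (of_real q ^ (2*N - 2) * w) (of_real q ^ (2*N)))
     / (qpoch w (of_real q ^ (2*N)) * qpoch (of_real q ^ (2*N) * w) (of_real q ^ (2*N)))"

text \<open>Matrix entry of Rbar(w): coefficient of v_a \<otimes> v_b in Rbar(w)(v_i \<otimes> v_j).\<close>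
definition Rbar_ent :: "real \<Rightarrow> complex \<Rightarrow> nat \<Rightarrow> nat \<Rightarrow> nat \<Rightarrow> nat \<Rightarrow> complex" where
  "Rbar_ent q w a b i j =
     (if i = j then (if a = i \<and> b = i then 1 else 0)
      else (if a = i \<and> b = j then (1 - w) * of_real q / (1 - of_real q ^ 2 * w) else 0)
         + (if a = j \<and> b = i then (1 - of_real q ^ 2) * w ^ (if j > i then 1 else 0)
                                   / (1 - of_real q ^ 2 * w) else 0))"

definition tidx :: "nat \<Rightarrow> nat \<Rightarrow> nat list set" where
  "tidx n N = {e. length e = n \<and> set e \<subseteq> {..<N}}"

definition tvecs :: "nat \<Rightarrow> nat \<Rightarrow> (nat list \<Rightarrow> complex) set" where
  "tvecs n N = {X. \<forall>e. e \<notin> tidx n N \<longrightarrow> X e = 0}"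

text \<open>R_{m,l}(w) acting on V^(tensor n) (0-based tensor positions m, l).\<close>
definition Rop :: "real \<Rightarrow> nat \<Rightarrow> nat \<Rightarrow> nat \<Rightarrow> nat \<Rightarrow> complex \<Rightarrow> (nat list \<Rightarrow> complex) \<Rightarrow> (nat list \<Rightarrow> complex)" where
  "Rop q n N m l w X = (\<lambda>e. if e \<in> tidx n N then
      (\<Sum>i<N. \<Sum>j<N. rfun q N w * Rbar_ent q w (e ! m) (e ! l) i j * X (e[m := i, l := j]))
     else 0)"

definition Rinv :: "real \<Rightarrow> nat \<Rightarrow> nat \<Rightarrow> nat \<Rightarrow> nat \<Rightarrow> complex \<Rightarrow> (nat list \<Rightarrow> complex) \<Rightarrow> (nat list \<Rightarrow> complex)" where
  "Rinv q n N m l w = the_inv_into (tvecs n N) (Rop q n N m l w)"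

text \<open>kappa_j with kappa_0 = kappa_N = 1; the operator prod_j kappa_j^{h_j} on slot m.\<close>
definition kapext :: "nat \<Rightarrow> (nat \<Rightarrow> complex) \<Rightarrow> nat \<Rightarrow> complex" where
  "kapext N kap j = (if j = 0 \<or> j = N then 1 else kap j)"

definition Hop :: "nat \<Rightarrow> (nat \<Rightarrow> complex) \<Rightarrow> nat \<Rightarrow> (nat list \<Rightarrow> complex) \<Rightarrow> (nat list \<Rightarrow> complex)" where
  "Hop N kap m X = (\<lambda>e. kapext N kap (Suc (e ! m)) / kapext N kap (e ! m) * X e)"

definition compose_ops :: "('a \<Rightarrow> 'a) list \<Rightarrow> 'a \<Rightarrow> 'a" where
  "compose_ops ops = foldr (\<circ>) ops id"

definition qKZ_op :: "real \<Rightarrow> real \<Rightarrow> nat \<Rightarrow> nat \<Rightarrow> (nat \<Rightarrow> complex) \<Rightarrow> nat \<Rightarrow> (nat \<Rightarrow> complex)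
    \<Rightarrow> (nat list \<Rightarrow> complex) \<Rightarrow> (nat list \<Rightarrow> complex)" where
  "qKZ_op q p n N kap m z = compose_ops
     (map (\<lambda>l. Rop q n N m l (of_real p * z m / z l)) (rev [0..<m])
      @ [Hop N kap m]
      @ map (\<lambda>k. Rinv q n N k m (z k / z m)) (rev [Suc m..<n]))"

text \<open>Generic points: ratios avoid 0 and the lattice q^(2Z) (where the meromorphic
  coefficients may have zeros or poles).\<close>
definition good :: "real \<Rightarrow> complex \<Rightarrow> bool" where
  "good q w \<longleftrightarrow> w \<noteq> 0 \<and> (\<forall>k::int. w \<noteq> of_real (q powi (2 * k)))"

definition generic :: "real \<Rightarrow> real \<Rightarrow> nat \<Rightarrow> (nat \<Rightarrow> complex) \<Rightarrow> bool" where
  "generic q p n z \<longleftrightarrow> torus n z \<and>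
     (\<forall>a<n. \<forall>b<n. a \<noteq> b \<longrightarrow> good q (z a / z b) \<and> good q (of_real p * z a / z b))"

definition qKZ_solution :: "real \<Rightarrow> real \<Rightarrow> nat \<Rightarrow> nat \<Rightarrow> (nat \<Rightarrow> complex)
    \<Rightarrow> ((nat \<Rightarrow> complex) \<Rightarrow> (nat list \<Rightarrow> complex)) \<Rightarrow> bool" where
  "qKZ_solution q p n N kap G \<longleftrightarrow>
     (\<forall>m<n. \<forall>z. generic q p n z \<longrightarrow>
        G (z(m := of_real p * z m)) = qKZ_op q p n N kap m z (G z))"

definition kappa :: "(nat \<Rightarrow> complex) \<Rightarrow> complex \<Rightarrow> nat \<Rightarrow> complex" where
  "kappa c C j = (\<Prod>l<j. c l) / C ^ j"

definition h_num :: "real \<Rightarrow> nat \<Rightarrow> complex \<Rightarrow> complex" where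
  "h_num q N z = qpoch z (of_real q ^ (2*N)) * qpoch (of_real q ^ (2*N) * z) (of_real q ^ (2*N))"

definition h_den :: "bool \<Rightarrow> real \<Rightarrow> nat \<Rightarrow> complex \<Rightarrow> complex" where
  "h_den pos q N z = (if pos then
       qpoch (of_real q ^ 2 * z) (of_real q ^ (2*N)) * qpoch (of_real q ^ (2*N - 2) * z) (of_real q ^ (2*N))
     else
       qpoch (of_real q ^ (2*N + 2) * z) (of_real q ^ (2*N)) * qpoch (inverse (of_real q ^ 2) * z) (of_real q ^ (2*N)))"

definition Kfun :: "complex \<Rightarrow> complex \<Rightarrow> (complex \<Rightarrow> complex) \<Rightarrow> nat \<Rightarrow> (nat \<Rightarrow> complex) \<Rightarrow> complex" where
  "Kfun \<alpha> \<beta> h n z = (\<Prod>a<n. z a powr (\<alpha> + \<beta> * of_nat (Suc a))) *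
      (\<Prod>b<n. \<Prod>a<b. h (z b / z a))"

definition Ffun :: "nat \<Rightarrow> nat \<Rightarrow> (nat \<Rightarrow> nat) \<Rightarrow> (nat list \<Rightarrow> (nat \<Rightarrow> complex) \<Rightarrow> complex)
    \<Rightarrow> (nat \<Rightarrow> complex) \<Rightarrow> (nat list \<Rightarrow> complex)" where
  "Ffun n N d f z = (\<lambda>e. if e \<in> Iset n N d then f e z else 0)"

definition Gfun :: "complex \<Rightarrow> complex \<Rightarrow> (complex \<Rightarrow> complex) \<Rightarrow> nat \<Rightarrow> nat \<Rightarrow> (nat \<Rightarrow> nat)
    \<Rightarrow> (nat list \<Rightarrow> (nat \<Rightarrow> complex) \<Rightarrow> complex) \<Rightarrow> (nat \<Rightarrow> complex) \<Rightarrow> (nat list \<Rightarrow> complex)" where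
  "Gfun \<alpha> \<beta> h n N d f z = (\<lambda>e. Kfun \<alpha> \<beta> h n z * Ffun n N d f z e)"

end

theory Submission
  imports Defs "HOL-Combinatorics.Permutations"
begin

text \<open>Write \<open>F = \<Sum> f\<^sub>\<epsilon> v\<^sub>\<epsilon>\<close>.  Relations (i) and (ii) of a qKZ family say that swapping
  \<open>z\<^sub>k\<close> and \<open>z\<^sub>k\<^sub>+\<^sub>1\<close> acts on \<open>F\<close> as the normalized R-matrix \<open>Rbar\<^sub>k\<^sub>,\<^sub>k\<^sub>+\<^sub>1(z\<^sub>k/z\<^sub>k\<^sub>+\<^sub>1)\<close>
  followed by the transposition of the two tensor factors, up to a scalar which is \<open>1\<close> in the
  plus case and \<open>(1 - q\<^sup>2u)/(u - q\<^sup>2)\<close> in the minus case.  Moving \<open>z\<^sub>1\<close> past all other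
  variables by such exchanges and then applying the cyclic relation (iii) gives the first qKZ
  equation with every \<open>R\<close> replaced by \<open>Rbar\<close> and an explicit scalar prefactor; one more exchange
  passes from the \<open>m\<close>-th equation to the \<open>(m+1)\<close>-st.  These prefactors, together with the
  normalizations \<open>r(z)\<close> of the R-matrices, are cancelled by \<open>K\<close>, through the difference
  equation of \<open>h\<close> and the choice of \<open>\<alpha>\<close> and \<open>\<beta>\<close>.\<close>

section \<open>q-Pochhammer symbols at generic points\<close>

lemma qpoch_convergent:
  fixes x z :: complex
  assumes "norm x < 1"
  shows "convergent_prod (\<lambda>j. 1 - x ^ j * z)"
proof -
  have "summable (\<lambda>j. norm z * norm x ^ j)"
    using assms by (intro summable_mult summable_geometric) auto
  then have "summable (\<lambda>j. norm ((1 - x ^ j * z) - 1))"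
    by (simp add: norm_mult norm_power mult.commute)
  then show ?thesis
    by (intro abs_convergent_prod_imp_convergent_prod summable_imp_abs_convergent_prod)
qed

lemma qpoch_nonzero:
  fixes x z :: complex
  assumes "norm x < 1" "\<And>j. x ^ j * z \<noteq> 1"
  shows "qpoch z x \<noteq> 0"
  unfolding qpoch_def using assms by (intro prodinf_nonzero qpoch_convergent) auto

lemma qpoch_unfold:
  fixes x z :: complex
  assumes "norm x < 1" "z \<noteq> 1"
  shows "qpoch z x = (1 - z) * qpoch (x * z) x"
proof -
  have "(\<Prod>j. 1 - x ^ Suc j * z) = qpoch z x / (1 - x ^ 0 * z)"
    unfolding qpoch_def using assms
    by (intro prodinf_split_head[of "\<lambda>j. 1 - x ^ j * z"] qpoch_convergent) auto
  moreover have "(\<lambda>j. 1 - x ^ Suc j * z) = (\<lambda>j. 1 - x ^ j * (x * z))"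
    by (auto simp: algebra_simps)
  ultimately show ?thesis
    using assms unfolding qpoch_def by (simp add: field_simps)
qed

lemma good_powi_mult_neq_1:
  assumes "good q w" "0 < q"
  shows "of_real (q powi (2 * k)) * w \<noteq> 1"
proof
  assume "of_real (q powi (2 * k)) * w = 1"
  then have "w = of_real (q powi (2 * - k))"
    using \<open>0 < q\<close> by (simp add: field_simps power_int_minus)
  with assms(1) show False
    unfolding good_def by blast
qed

lemma good_inverse:
  assumes "good q w" "0 < q"
  shows "good q (1 / w)"
  unfolding good_def
proof safe
  show "1 / w = 0 \<Longrightarrow> False"
    using assms(1) by (simp add: good_def)
next
  fix k :: int
  assume "1 / w = of_real (q powi (2 * k))"
  then have "of_real (q powi (2 * k)) * w = 1"
    using assms(1) by (simp add: good_def field_simps)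
  with good_powi_mult_neq_1[OF assms] show False
    by blast
qed

lemma goodD:
  assumes "good q w" "0 < q"
  shows "w \<noteq> 0" "w \<noteq> 1" "w \<noteq> of_real q ^ 2" "of_real q ^ 2 * w \<noteq> 1"
proof -
  show "w \<noteq> 0" "w \<noteq> 1"
    using assms unfolding good_def by (metis mult_zero_right of_real_1 power_int_0_right)+
  show "w \<noteq> of_real q ^ 2"
    using assms(1) unfolding good_def
    by (metis mult.right_neutral of_real_power power_int_of_nat of_nat_numeral of_int_numeral)
  show "of_real q ^ 2 * w \<noteq> 1"
    using good_powi_mult_neq_1[OF assms, of 1] by simp
qed

lemma torus_comp_permutes: "\<pi> permutes {..<n} \<Longrightarrow> torus n z \<Longrightarrow> torus n (z \<circ> \<pi>)"
  unfolding torus_def using permutes_in_image by fastforce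

lemma generic_comp_permutes:
  assumes "\<pi> permutes {..<n}" "generic q p n z"
  shows "generic q p n (z \<circ> \<pi>)"
proof -
  have "a < n \<Longrightarrow> \<pi> a < n" "\<pi> a = \<pi> b \<longleftrightarrow> a = b" for a b
    using permutes_in_image[OF assms(1)] permutes_inj[OF assms(1)] by (auto dest: injD)
  then show ?thesis
    using assms(2) torus_comp_permutes[OF assms(1)] unfolding generic_def by auto
qed

lemma genericD:
  assumes "generic q p n z"
  shows "torus n z"
    and "a < n \<Longrightarrow> b < n \<Longrightarrow> a \<noteq> b \<Longrightarrow> good q (z a / z b)"
    and "a < n \<Longrightarrow> b < n \<Longrightarrow> a \<noteq> b \<Longrightarrow> good q (of_real p * z a / z b)"
  using assms unfolding generic_def by blast+

lemma qpoch_good_nonzero: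
  assumes "good q w" "0 < q" "q < 1" "1 \<le> N"
  shows "qpoch (of_real (q powi (2 * k)) * w) (of_real q ^ (2 * N)) \<noteq> 0"
proof (rule qpoch_nonzero)
  show "norm ((of_real q :: complex) ^ (2 * N)) < 1"
    using assms(2-4) by (simp add: norm_power power_less_one_iff)
  fix j
  have "(of_real q ^ (2 * N)) ^ j * (of_real (q powi (2 * k)) * w)
      = of_real (q powi (2 * (int (N * j) + k))) * w"
    using assms(2) by (simp add: power_int_add power_int_mult power_mult[symmetric] algebra_simps)
  then show "(of_real q ^ (2 * N)) ^ j * (of_real (q powi (2 * k)) * w) \<noteq> 1"
    using good_powi_mult_neq_1[OF assms(1,2)] by metis
qed

lemma qpoch_good_nonzero_nat:
  assumes "good q w" "0 < q" "q < 1" "1 \<le> N"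
  shows "qpoch (of_real q ^ (2 * a) * w) (of_real q ^ (2 * N)) \<noteq> 0"
proof -
  have "q powi (2 * int a) = q ^ (2 * a)"
    by (metis of_nat_mult of_nat_numeral power_int_of_nat)
  then show ?thesis
    using qpoch_good_nonzero[OF assms, of "int a"] by simp
qed

lemma h_num_nonzero:
  assumes "good q w" "0 < q" "q < 1" "1 \<le> N"
  shows "h_num q N w \<noteq> 0"
  using qpoch_good_nonzero_nat[OF assms, of 0] qpoch_good_nonzero_nat[OF assms, of N]
  unfolding h_num_def by (simp add: power_mult)

lemma h_den_nonzero:
  assumes "good q w" "0 < q" "q < 1" "1 \<le> N"
  shows "h_den pos q N w \<noteq> 0"
proof -
  have "(of_real q :: complex) ^ (2 * N - 2) = of_real q ^ (2 * (N - 1))"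
    by (simp add: right_diff_distrib')
  moreover have "inverse (of_real q ^ 2) = (of_real (q powi (2 * - 1)) :: complex)"
    by (simp add: power_int_minus)
  ultimately show ?thesis
    using qpoch_good_nonzero_nat[OF assms, of 1] qpoch_good_nonzero_nat[OF assms, of "N - 1"]
      qpoch_good_nonzero_nat[OF assms, of "N + 1"] qpoch_good_nonzero[OF assms, of "- 1"]
    unfolding h_den_def by (simp add: power_mult)
qed

lemma rfun_conv_h:
  "rfun q N w = of_real (q powr (1 / real N - 1)) * h_den True q N w / h_num q N w"
  unfolding rfun_def h_den_def h_num_def by simp

lemma rfun_nonzero:
  assumes "good q w" "0 < q" "q < 1" "1 \<le> N"
  shows "rfun q N w \<noteq> 0"
  using h_den_nonzero[OF assms, of True] h_num_nonzero[OF assms] assms(2)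
  unfolding rfun_conv_h by simp

lemma h_den_False_conv_True:
  assumes "good q w" "0 < q" "q < 1" "1 \<le> N"
  shows "h_den False q N w * (1 - of_real q ^ 2 * w)
       = h_den True q N w * (1 - inverse (of_real q ^ 2) * w)"
proof -
  let ?x = "(of_real q :: complex) ^ (2 * N)"
  have x: "norm ?x < 1"
    using assms(2-4) by (simp add: norm_power power_less_one_iff)
  have "2 * N = (2 * N - 2) + 2"
    using assms(4) by simp
  then have "?x = of_real q ^ (2 * N - 2) * of_real q ^ 2"
    by (metis power_add)
  then have x_minus: "?x * (inverse (of_real q ^ 2) * w) = of_real q ^ (2 * N - 2) * w"
    using assms(2) by (simp add: field_simps power2_eq_square)
  have x_plus: "?x * (of_real q ^ 2 * w) = of_real q ^ (2 * N + 2) * w"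
    by (simp add: power_add mult.assoc power2_eq_square)
  have "inverse (of_real q ^ 2) * w \<noteq> 1"
    using goodD(3)[OF assms(1,2)] assms(2) by (auto simp: field_simps)
  then have "qpoch (inverse (of_real q ^ 2) * w) ?x
      = (1 - inverse (of_real q ^ 2) * w) * qpoch (of_real q ^ (2 * N - 2) * w) ?x"
    using qpoch_unfold[OF x] x_minus by metis
  moreover have "qpoch (of_real q ^ 2 * w) ?x
      = (1 - of_real q ^ 2 * w) * qpoch (of_real q ^ (2 * N + 2) * w) ?x"
    using qpoch_unfold[OF x goodD(4)[OF assms(1,2)]] x_plus by metis
  ultimately show ?thesis
    unfolding h_den_def by simp
qed

section \<open>The normalized R-matrix\<close>

lemma Rbar_ent_diag:
  "a \<noteq> b \<Longrightarrow> Rbar_ent q w a b a b = (1 - w) * of_real q / (1 - of_real q ^ 2 * w)"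
  unfolding Rbar_ent_def by simp

lemma Rbar_ent_offdiag:
  "a \<noteq> b \<Longrightarrow> Rbar_ent q w a b b a = (1 - of_real q ^ 2) * (if b < a then w else 1)
      / (1 - of_real q ^ 2 * w)"
  unfolding Rbar_ent_def by simp

lemma Rbar_ent_inverse:
  assumes "a \<noteq> b" "w \<noteq> 0" "w \<noteq> of_real q ^ 2"
  shows "Rbar_ent q (1 / w) a b a b = (w - 1) * of_real q / (w - of_real q ^ 2)"
    and "Rbar_ent q (1 / w) a b b a = (1 - of_real q ^ 2) * (if b < a then 1 else w)
        / (w - of_real q ^ 2)"
  using assms unfolding Rbar_ent_def by (simp_all add: divide_simps)

lemma Rbar_ent_unitary:
  assumes "a \<noteq> b" "w \<noteq> 0" "w \<noteq> of_real q ^ 2" "of_real q ^ 2 * w \<noteq> 1"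
  shows "Rbar_ent q w a b a b * Rbar_ent q (1 / w) b a b a
           + Rbar_ent q w a b b a * Rbar_ent q (1 / w) a b b a = 1"
    and "Rbar_ent q w a b a b * Rbar_ent q (1 / w) b a a b
           + Rbar_ent q w a b b a * Rbar_ent q (1 / w) a b a b = 0"
proof -
  define Q where "Q = (of_real q :: complex) ^ 2"
  have nz: "1 - Q * w \<noteq> 0" "w - Q \<noteq> 0"
    using assms unfolding Q_def by auto
  have "(1 - w) * of_real q * ((w - 1) * of_real q)
      + (1 - Q) * (if b < a then w else 1) * ((1 - Q) * (if b < a then 1 else w))
      = (1 - Q * w) * (w - Q)"
    unfolding Q_def by (simp add: algebra_simps power2_eq_square)
  then show "Rbar_ent q w a b a b * Rbar_ent q (1 / w) b a b a
           + Rbar_ent q w a b b a * Rbar_ent q (1 / w) a b b a = 1"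
    using nz unfolding Rbar_ent_diag[OF assms(1), where w=w]
      Rbar_ent_offdiag[OF assms(1), where w=w]
      Rbar_ent_inverse(1)[OF assms(1)[symmetric] assms(2,3)] Rbar_ent_inverse(2)[OF assms(1-3)]
        Q_def[symmetric]
    by (simp only: times_divide_times_eq add_divide_distrib[symmetric]) simp
  have "(1 - w) * of_real q * ((1 - Q) * (if a < b then 1 else w))
      + (1 - Q) * (if b < a then w else 1) * ((w - 1) * of_real q) = 0"
    using assms(1) by (cases "b < a") (auto simp: algebra_simps)
  then show "Rbar_ent q w a b a b * Rbar_ent q (1 / w) b a a b
           + Rbar_ent q w a b b a * Rbar_ent q (1 / w) a b a b = 0"
    unfolding Rbar_ent_diag[OF assms(1), where w=w] Rbar_ent_offdiag[OF assms(1), where w=w]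
      Rbar_ent_inverse[OF assms(1)[symmetric] assms(2,3)] Rbar_ent_inverse[OF assms(1-3)]
        Q_def[symmetric]
    by (simp only: times_divide_times_eq add_divide_distrib[symmetric]) simp
qed

lemma sum_sum_delta:
  fixes a b N :: nat and c :: "'a::comm_monoid_add"
  assumes "a < N" "b < N"
  shows "(\<Sum>i<N. \<Sum>j<N. if i = a then if j = b then c else 0 else 0) = c"
proof -
  have "(\<Sum>j<N. if i = a then if j = b then c else 0 else 0)
      = (if i = a then \<Sum>j<N. if j = b then c else 0 else 0)" for i
    by simp
  then show ?thesis
    using assms by simp
qed

lemma Rbar_ent_double_sum:
  fixes g :: "nat \<Rightarrow> nat \<Rightarrow> complex"
  assumes "a < N" "b < N"
  shows "(\<Sum>i<N. \<Sum>j<N. Rbar_ent q w a b i j * g i j) =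
    (if a = b then g a a else Rbar_ent q w a b a b * g a b + Rbar_ent q w a b b a * g b a)"
proof -
  have "(\<Sum>i<N. \<Sum>j<N. Rbar_ent q w a b i j * g i j) =
      (\<Sum>i<N. \<Sum>j<N. (if i = a then if j = b then Rbar_ent q w a b a b * g a b else 0 else 0)
        + (if i = b then if j = a then of_bool (a \<noteq> b) * Rbar_ent q w a b b a
          * g b a else 0 else 0))"
    unfolding Rbar_ent_def by (intro sum.cong refl) auto
  also have "\<dots> = Rbar_ent q w a b a b * g a b + of_bool (a \<noteq> b) * Rbar_ent q w a b b a * g b a"
    using assms by (simp only: sum.distrib sum_sum_delta)
  finally show ?thesis
    by (simp add: Rbar_ent_def)
qed

definition Rbar_op :: "real \<Rightarrow> nat \<Rightarrow> nat \<Rightarrow> nat \<Rightarrow> nat \<Rightarrow> complex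
    \<Rightarrow> (nat list \<Rightarrow> complex) \<Rightarrow> (nat list \<Rightarrow> complex)" where
  "Rbar_op q n N m l w X = (\<lambda>e. if e \<in> tidx n N then
      (\<Sum>i<N. \<Sum>j<N. Rbar_ent q w (e ! m) (e ! l) i j * X (e[m := i, l := j])) else 0)"

lemma tidx_length: "e \<in> tidx n N \<Longrightarrow> length e = n"
  unfolding tidx_def by auto

lemma tidx_nth_less: "e \<in> tidx n N \<Longrightarrow> m < n \<Longrightarrow> e ! m < N"
  unfolding tidx_def using nth_mem by fastforce

lemma tidx_list_update: "e \<in> tidx n N \<Longrightarrow> i < N \<Longrightarrow> e[m := i] \<in> tidx n N"
  unfolding tidx_def by (auto dest: subsetD[OF set_update_subset_insert])

lemma Rbar_op_apply:
  assumes "e \<in> tidx n N" "m < n" "l < n" "m \<noteq> l"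
  shows "Rbar_op q n N m l w X e = (if e ! m = e ! l then X e else
      Rbar_ent q w (e ! m) (e ! l) (e ! m) (e ! l) * X e
    + Rbar_ent q w (e ! m) (e ! l) (e ! l) (e ! m) * X (e[m := e ! l, l := e ! m]))"
proof -
  have "e ! m = e ! l \<Longrightarrow> e[m := e ! l, l := e ! l] = e"
    by (metis list_update_id)
  then show ?thesis
    using assms Rbar_ent_double_sum[OF tidx_nth_less[OF assms(1,2)] tidx_nth_less[OF assms(1,3)]]
    by (auto simp: Rbar_op_def)
qed

lemma Rbar_op_Rbar_op_apply:
  assumes "e \<in> tidx n N" "m < n" "l < n" "m \<noteq> l" "e ! m \<noteq> e ! l"
  defines "a \<equiv> e ! m" and "b \<equiv> e ! l"
  shows "Rbar_op q n N m l w (Rbar_op q n N l m v X) e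
    = (Rbar_ent q w a b a b * Rbar_ent q v b a b a + Rbar_ent q w a b b a * Rbar_ent q v a b b a)
      * X e
    + (Rbar_ent q w a b a b * Rbar_ent q v b a a b + Rbar_ent q w a b b a * Rbar_ent q v a b a b)
        * X (e[m := b, l := a])"
proof -
  define e' where "e' = e[m := b, l := a]"
  have len: "length e = n"
    using assms(1) by (rule tidx_length)
  have e': "e' \<in> tidx n N" "e' ! m = b" "e' ! l = a"
      "e'[l := b, m := a] = e" "e[l := a, m := b] = e'"
    using assms(1-4) len unfolding e'_def a_def b_def
    by (auto intro: tidx_list_update tidx_nth_less simp: list_update_swap list_update_id)
  have "Rbar_op q n N m l w (Rbar_op q n N l m v X) e
      = Rbar_ent q w a b a b * Rbar_op q n N l m v X e + Rbar_ent q w a b b a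
        * Rbar_op q n N l m v X e'"
    using Rbar_op_apply[OF assms(1-4)] assms(5) unfolding e'_def a_def b_def by simp
  also have "\<dots> = Rbar_ent q w a b a b * (Rbar_ent q v b a b a * X e + Rbar_ent q v b a a b * X e')
      + Rbar_ent q w a b b a * (Rbar_ent q v a b a b * X e' + Rbar_ent q v a b b a * X e)"
    using Rbar_op_apply[OF assms(1,3,2) assms(4)[symmetric]]
      Rbar_op_apply[OF e'(1) assms(3,2) assms(4)[symmetric]]
      e' assms(5) unfolding a_def b_def by simp
  finally show ?thesis
    unfolding e'_def by (simp add: algebra_simps)
qed

lemma Rbar_op_unitary:
  assumes "m < n" "l < n" "m \<noteq> l" "w \<noteq> 0" "w \<noteq> of_real q ^ 2" "of_real q ^ 2 * w \<noteq> 1"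
    and "X \<in> tvecs n N"
  shows "Rbar_op q n N m l w (Rbar_op q n N l m (1 / w) X) = X"
proof
  fix e
  consider "e \<notin> tidx n N" | "e \<in> tidx n N" "e ! m = e ! l" | "e \<in> tidx n N" "e ! m \<noteq> e ! l"
    by blast
  then show "Rbar_op q n N m l w (Rbar_op q n N l m (1 / w) X) e = X e"
  proof cases
    case 1
    then show ?thesis
      using assms(7) unfolding Rbar_op_def tvecs_def by auto
  next
    case 2
    then show ?thesis
      using assms(1-3) Rbar_op_apply[OF 2(1) assms(2,1) assms(3)[symmetric]]
        by (simp add: Rbar_op_apply)
  next
    case 3
    then show ?thesis
      using Rbar_op_Rbar_op_apply[OF 3(1) assms(1-3) 3(2)] Rbar_ent_unitary[OF 3(2) assms(4-6)]
        by simp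
  qed
qed

lemma Rbar_op_unitary_good:
  assumes "good q w" "0 < q" "m < n" "l < n" "m \<noteq> l" "X \<in> tvecs n N"
  shows "Rbar_op q n N m l w (Rbar_op q n N l m (1 / w) X) = X"
    and "Rbar_op q n N m l (1 / w) (Rbar_op q n N l m w X) = X"
  using Rbar_op_unitary[OF assms(3-5) goodD(1,3,4)[OF assms(1,2)] assms(6)]
    Rbar_op_unitary[OF assms(3-5) goodD(1,3,4)[OF good_inverse[OF assms(1,2)] assms(2)] assms(6)]
  by simp_all

section \<open>Operators on tensor vectors\<close>

definition permute_tvec :: "(nat \<Rightarrow> nat) \<Rightarrow> (nat list \<Rightarrow> complex) \<Rightarrow> nat list \<Rightarrow> complex" where
  "permute_tvec \<pi> X = (\<lambda>e. X (permute_list \<pi> e))"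

definition scale_tvec :: "complex \<Rightarrow> (nat list \<Rightarrow> complex) \<Rightarrow> nat list \<Rightarrow> complex" where
  "scale_tvec c X = (\<lambda>e. c * X e)"

lemma scale_tvec_scale_tvec [simp]: "scale_tvec a (scale_tvec b X) = scale_tvec (a * b) X"
  unfolding scale_tvec_def by (simp add: mult.assoc)

lemma scale_tvec_1 [simp]: "scale_tvec 1 X = X"
  unfolding scale_tvec_def by simp

lemma permute_tvec_id [simp]: "permute_tvec id X = X"
  unfolding permute_tvec_def by simp

lemma permute_list_in_tidx_iff:
  assumes "\<pi> permutes {..<n}"
  shows "permute_list \<pi> e \<in> tidx n N \<longleftrightarrow> e \<in> tidx n N"
  using assms by (cases "length e = n") (auto simp: tidx_def)

lemma permute_tvec_in_tvecs: "\<pi> permutes {..<n} \<Longrightarrow> X \<in> tvecs n N \<Longrightarrow> permute_tvec \<pi> X \<in> tvecs n N"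
  unfolding tvecs_def permute_tvec_def using permute_list_in_tidx_iff by blast

lemma Rbar_op_in_tvecs: "Rbar_op q n N m l w X \<in> tvecs n N"
  unfolding tvecs_def Rbar_op_def by auto

lemma Hop_in_tvecs: "X \<in> tvecs n N \<Longrightarrow> Hop N kap m X \<in> tvecs n N"
  unfolding tvecs_def Hop_def by auto

lemma scale_tvec_in_tvecs: "X \<in> tvecs n N \<Longrightarrow> scale_tvec c X \<in> tvecs n N"
  unfolding tvecs_def scale_tvec_def by auto

lemma Rbar_op_scale_tvec: "Rbar_op q n N m l w (scale_tvec c X)
    = scale_tvec c (Rbar_op q n N m l w X)"
  unfolding Rbar_op_def scale_tvec_def by (auto simp: sum_distrib_left algebra_simps)

lemma Hop_scale_tvec: "Hop N kap m (scale_tvec c X) = scale_tvec c (Hop N kap m X)"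
  unfolding Hop_def scale_tvec_def by (auto simp: algebra_simps)

lemma permute_tvec_scale_tvec: "permute_tvec \<pi> (scale_tvec c X) = scale_tvec c (permute_tvec \<pi> X)"
  unfolding permute_tvec_def scale_tvec_def by simp

lemma permute_tvec_comp:
  assumes "\<pi> permutes {..<n}" "\<sigma> permutes {..<n}" "X \<in> tvecs n N"
  shows "permute_tvec \<pi> (permute_tvec \<sigma> X) = permute_tvec (\<pi> \<circ> \<sigma>) X"
proof
  fix e
  show "permute_tvec \<pi> (permute_tvec \<sigma> X) e = permute_tvec (\<pi> \<circ> \<sigma>) X e"
  proof (cases "length e = n")
    case True
    then show ?thesis
      unfolding permute_tvec_def using assms(1,2) by (simp add: permute_list_compose)
  next
    case False
    then have "permute_list \<sigma> (permute_list \<pi> e) \<notin> tidx n N" "permute_list (\<pi> \<circ> \<sigma>) e \<notin> tidx n N"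
      unfolding tidx_def by auto
    then show ?thesis
      using assms(3) unfolding permute_tvec_def tvecs_def by auto
  qed
qed

lemma permute_list_list_update2:
  assumes "\<pi> permutes {..<n}" "length e = n" "m < n" "l < n"
  shows "permute_list \<pi> (e[\<pi> m := i, \<pi> l := j]) = (permute_list \<pi> e)[m := i, l := j]"
proof (rule nth_equalityI)
  fix x
  assume "x < length (permute_list \<pi> (e[\<pi> m := i, \<pi> l := j]))"
  then have x: "x < n" "\<pi> x < n"
    using assms permutes_in_image[OF assms(1)] by auto
  have "\<pi> x = \<pi> y \<longleftrightarrow> x = y" "\<pi> y = \<pi> x \<longleftrightarrow> y = x" for y
    using permutes_inj[OF assms(1)] by (auto dest: injD)
  then show "permute_list \<pi> (e[\<pi> m := i, \<pi> l := j]) ! x = (permute_list \<pi> e)[m := i, l := j] ! x"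
    using x assms by (simp add: permute_list_nth nth_list_update)
qed simp

lemma permute_tvec_Rbar_op:
  assumes "\<pi> permutes {..<n}" "m < n" "l < n"
  shows "permute_tvec \<pi> (Rbar_op q n N m l w X) = Rbar_op q n N (\<pi> m) (\<pi> l) w (permute_tvec \<pi> X)"
proof
  fix e
  show "permute_tvec \<pi> (Rbar_op q n N m l w X) e = Rbar_op q n N (\<pi> m) (\<pi> l) w (permute_tvec \<pi> X) e"
  proof (cases "e \<in> tidx n N")
    case True
    then have len: "length e = n"
      by (rule tidx_length)
    show ?thesis
      unfolding permute_tvec_def Rbar_op_def
      using True permute_list_in_tidx_iff[OF assms(1)]
        permute_list_list_update2[OF assms(1) len assms(2,3)]
        len assms by (simp add: permute_list_nth)
  next
    case False
    then show ?thesis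
      unfolding permute_tvec_def Rbar_op_def using permute_list_in_tidx_iff[OF assms(1)] by simp
  qed
qed

lemma permute_tvec_Hop:
  assumes "\<pi> permutes {..<n}" "m < n" "X \<in> tvecs n N"
  shows "permute_tvec \<pi> (Hop N kap m X) = Hop N kap (\<pi> m) (permute_tvec \<pi> X)"
proof
  fix e
  show "permute_tvec \<pi> (Hop N kap m X) e = Hop N kap (\<pi> m) (permute_tvec \<pi> X) e"
  proof (cases "length e = n")
    case True
    then show ?thesis
      unfolding permute_tvec_def Hop_def using assms by (simp add: permute_list_nth)
  next
    case False
    then have "permute_list \<pi> e \<notin> tidx n N"
      unfolding tidx_def by auto
    then show ?thesis
      using assms(3) unfolding permute_tvec_def Hop_def tvecs_def by auto
  qed
qed

lemma compose_ops_Nil [simp]: "compose_ops [] X = X"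
  unfolding compose_ops_def by simp

lemma compose_ops_Cons [simp]: "compose_ops (A # As) X = A (compose_ops As X)"
  unfolding compose_ops_def by simp

lemma compose_ops_append [simp]: "compose_ops (As @ Bs) X = compose_ops As (compose_ops Bs X)"
  by (induction As) auto

definition tvec_op :: "nat \<Rightarrow> nat \<Rightarrow> ((nat list \<Rightarrow> complex) \<Rightarrow> (nat list \<Rightarrow> complex)) \<Rightarrow> bool" where
  "tvec_op n N A \<longleftrightarrow> (\<forall>X\<in>tvecs n N. A X \<in> tvecs n N \<and> (\<forall>c. A (scale_tvec c X) = scale_tvec c (A X)))"

lemma tvec_op_Rbar_op: "tvec_op n N (Rbar_op q n N m l w)"
  unfolding tvec_op_def by (simp add: Rbar_op_in_tvecs Rbar_op_scale_tvec)

lemma tvec_op_Hop: "tvec_op n N (Hop N kap m)"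
  unfolding tvec_op_def by (simp add: Hop_in_tvecs Hop_scale_tvec)

lemma compose_ops_tvec_op:
  assumes "\<forall>A\<in>set As. tvec_op n N A" "X \<in> tvecs n N"
  shows "compose_ops As X \<in> tvecs n N"
    and "compose_ops As (scale_tvec c X) = scale_tvec c (compose_ops As X)"
  using assms by (induction As) (auto simp: tvec_op_def)

lemma permute_tvec_compose_ops:
  assumes "list_all2 (\<lambda>A B. \<forall>X\<in>tvecs n N. permute_tvec \<pi> (A X) = B (permute_tvec \<pi> X)) As Bs"
    and "\<forall>A\<in>set As. tvec_op n N A" "X \<in> tvecs n N"
  shows "permute_tvec \<pi> (compose_ops As X) = compose_ops Bs (permute_tvec \<pi> X)"
  using assms
proof (induction As Bs rule: list_all2_induct)
  case (Cons A As B Bs)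
  then have "compose_ops As X \<in> tvecs n N"
    by (intro compose_ops_tvec_op) auto
  with Cons show ?case
    by simp
qed simp

lemma compose_ops_map_scale:
  assumes "\<forall>i\<in>set I. \<forall>X\<in>tvecs n N. A i X = scale_tvec (s i) (B i X)"
    and "\<forall>i\<in>set I. tvec_op n N (B i)" "X \<in> tvecs n N"
  shows "compose_ops (map A I) X = scale_tvec (prod_list (map s I)) (compose_ops (map B I) X)"
  using assms
proof (induction I)
  case (Cons i I)
  have "compose_ops (map B I) X \<in> tvecs n N"
    using Cons by (intro compose_ops_tvec_op) auto
  with Cons show ?case
    by (simp add: tvec_op_def scale_tvec_in_tvecs mult.commute)
qed simp

section \<open>Exchange relations of a qKZ family\<close>

lemma DL_relation_solve:
  fixes t u S A B :: complex
  assumes "t \<noteq> 0" "u \<noteq> 1" "t\<^sup>2 * u \<noteq> 1"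
    and "t * S + (t - inverse t) / (u - 1) * (S - A) = B"
  shows "S = (t * (u - 1) * B + (t\<^sup>2 - 1) * A) / (t\<^sup>2 * u - 1)"
proof -
  have "t * (u - 1) * B = t * (u - 1) * (t * S + (t - inverse t) / (u - 1) * (S - A))"
    using assms(4) by simp
  also have "\<dots> = (t\<^sup>2 * u - 1) * S - (t\<^sup>2 - 1) * A"
    using assms(1,2) by (simp add: field_simps power2_eq_square)
  finally show ?thesis
    using assms(3) by (simp add: eq_divide_eq algebra_simps)
qed

lemma DL_relation_solve_swapped:
  fixes t u S A B :: complex
  assumes "t \<noteq> 0" "u \<noteq> 0" "u \<noteq> 1" "t\<^sup>2 * u \<noteq> 1"
    and "S = (t * (u - 1) * B + (t\<^sup>2 - 1) * A) / (t\<^sup>2 * u - 1)"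
  shows "t * A + (t - inverse t) / (1 / u - 1) * (A - S)
       = (t * (u - 1) * A + (t\<^sup>2 - 1) * u * B) / (t\<^sup>2 * u - 1)"
proof -
  define D where "D = t\<^sup>2 * u - 1"
  have D: "D \<noteq> 0" "t * (1 - u) \<noteq> 0"
    using assms(1,3,4) unfolding D_def by auto
  have "(t - inverse t) / (1 / u - 1) = (t\<^sup>2 - 1) * u / (t * (1 - u))"
    using assms(1,2) D by (simp add: field_simps power2_eq_square)
  moreover have "A - S = - (t * (1 - u)) * ((t * A - B) / D)"
    unfolding assms(5) D_def[symmetric] using D by (simp add: field_simps power2_eq_square D_def)
  ultimately have "(t - inverse t) / (1 / u - 1) * (A - S) = - ((t\<^sup>2 - 1) * u * ((t * A - B) / D))"
    using D(2) by simp
  then show ?thesis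
    unfolding D_def[symmetric] using D(1) by (simp add: field_simps power2_eq_square D_def)
qed

lemma exch_coeffs_plus:
  fixes x u :: complex
  assumes "x \<noteq> 0" "1 - x\<^sup>2 * u \<noteq> 0"
  shows "x * (u - 1) / (x\<^sup>2 * u - 1) = (1 - u) * x / (1 - x\<^sup>2 * u)"
    and "(x\<^sup>2 - 1) / (x\<^sup>2 * u - 1) = (1 - x\<^sup>2) / (1 - x\<^sup>2 * u)"
    and "(x * (u - 1) * x + (x\<^sup>2 - 1)) / (x\<^sup>2 * u - 1) = 1"
proof -
  have "x\<^sup>2 * u - 1 \<noteq> 0"
    using assms(2) by (simp add: algebra_simps)
  then show "x * (u - 1) / (x\<^sup>2 * u - 1) = (1 - u) * x / (1 - x\<^sup>2 * u)"
    and "(x\<^sup>2 - 1) / (x\<^sup>2 * u - 1) = (1 - x\<^sup>2) / (1 - x\<^sup>2 * u)"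
    and "(x * (u - 1) * x + (x\<^sup>2 - 1)) / (x\<^sup>2 * u - 1) = 1"
    using assms by (simp_all add: field_simps power2_eq_square)
qed

lemma exch_coeffs_minus:
  fixes x u :: complex
  assumes "x \<noteq> 0" "1 - x\<^sup>2 * u \<noteq> 0" "u - x\<^sup>2 \<noteq> 0"
  shows "(- inverse x)\<^sup>2 * u \<noteq> 1"
    and "- inverse x * (u - 1) / ((- inverse x)\<^sup>2 * u - 1)
       = (1 - x\<^sup>2 * u) / (u - x\<^sup>2) * ((1 - u) * x / (1 - x\<^sup>2 * u))"
    and "((- inverse x)\<^sup>2 - 1) / ((- inverse x)\<^sup>2 * u - 1)
       = (1 - x\<^sup>2 * u) / (u - x\<^sup>2) * ((1 - x\<^sup>2) / (1 - x\<^sup>2 * u))"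
    and "(- inverse x * (u - 1) * - inverse (- inverse x) + ((- inverse x)\<^sup>2 - 1))
        / ((- inverse x)\<^sup>2 * u - 1)
       = (1 - x\<^sup>2 * u) / (u - x\<^sup>2)"
proof -
  have e: "(- inverse x)\<^sup>2 * u - 1 = (u - x\<^sup>2) / x\<^sup>2"
    using assms(1) by (simp add: field_simps power2_eq_square)
  then show "(- inverse x)\<^sup>2 * u \<noteq> 1"
    using assms(1,3) by auto
  have cancel: "(1 - x\<^sup>2 * u) / (u - x\<^sup>2) * (y / (1 - x\<^sup>2 * u)) = y / (u - x\<^sup>2)" for y
    using assms(2) by simp
  show "- inverse x * (u - 1) / ((- inverse x)\<^sup>2 * u - 1)
       = (1 - x\<^sup>2 * u) / (u - x\<^sup>2) * ((1 - u) * x / (1 - x\<^sup>2 * u))"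
    and "((- inverse x)\<^sup>2 - 1) / ((- inverse x)\<^sup>2 * u - 1)
       = (1 - x\<^sup>2 * u) / (u - x\<^sup>2) * ((1 - x\<^sup>2) / (1 - x\<^sup>2 * u))"
    and "(- inverse x * (u - 1) * - inverse (- inverse x) + ((- inverse x)\<^sup>2 - 1))
        / ((- inverse x)\<^sup>2 * u - 1)
       = (1 - x\<^sup>2 * u) / (u - x\<^sup>2)"
    unfolding e cancel using assms by (simp_all add: field_simps power2_eq_square)
qed

lemma Iset_imp_tidx: "e \<in> Iset n N d \<Longrightarrow> e \<in> tidx n N"
  unfolding Iset_def tidx_def by auto

lemma permute_list_in_Iset_iff:
  assumes "\<pi> permutes {..<n}"
  shows "permute_list \<pi> e \<in> Iset n N d \<longleftrightarrow> e \<in> Iset n N d"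
proof (cases "length e = n")
  case True
  then have "mset (permute_list \<pi> e) = mset e"
    using assms by (intro mset_permute_list) auto
  then show ?thesis
    unfolding Iset_def by (auto simp flip: count_mset dest: mset_eq_setD mset_eq_length)
qed (auto simp: Iset_def)

lemma Ffun_in_tvecs: "Ffun n N d f z \<in> tvecs n N"
  unfolding tvecs_def Ffun_def using Iset_imp_tidx by auto

lemma transpose_Suc_permutes: "Suc k < n \<Longrightarrow> Transposition.transpose k (Suc k) permutes {..<n}"
  by (rule permutes_swap_id) auto

lemma permute_list_transpose_Suc:
  "Suc k < length e \<Longrightarrow> permute_list (Transposition.transpose k (Suc k)) e
      = e[k := e ! Suc k, Suc k := e ! k]"
  by (rule nth_equalityI) (auto simp: permute_list_def nth_list_update Transposition.transpose_def)

lemma swapz_conv_comp: "swapz k z = z \<circ> Transposition.transpose k (Suc k)"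
  unfolding swapz_def Transposition.transpose_def by (auto simp: fun_eq_iff)

lemma torus_swapz: "Suc k < n \<Longrightarrow> torus n z \<Longrightarrow> torus n (swapz k z)"
  unfolding torus_def swapz_def by auto

locale qKZ_family_data =
  fixes n N :: nat and q p :: real and t12 :: complex and pos :: bool
    and d :: "nat \<Rightarrow> nat" and c :: "nat \<Rightarrow> complex"
    and f :: "nat list \<Rightarrow> (nat \<Rightarrow> complex) \<Rightarrow> complex"
  assumes q_pos: "0 < q" and q_less_1: "q < 1"
    and family: "qKZ_family pos t12 p n N d c f"
    and t12_conv_q: "if pos then t12 = of_real q else of_real q = - inverse t12"
begin

abbreviation F :: "(nat \<Rightarrow> complex) \<Rightarrow> nat list \<Rightarrow> complex" where
  "F \<equiv> Ffun n N d f"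

text \<open>In the minus case the exchange relations reproduce \<open>Rbar\<close> only up to this scalar.\<close>
definition exch_factor :: "complex \<Rightarrow> complex" where
  "exch_factor u = (if pos then 1 else (1 - of_real q ^ 2 * u) / (u - of_real q ^ 2))"

lemma exch_factor_nonzero: "good q u \<Longrightarrow> exch_factor u \<noteq> 0"
  using goodD[OF _ q_pos, of u] by (auto simp: exch_factor_def)

lemma family_equal:
  "e \<in> Iset n N d \<Longrightarrow> Suc i < n \<Longrightarrow> e ! i = e ! Suc i \<Longrightarrow> torus n z \<Longrightarrow> z i \<noteq> z (Suc i) \<Longrightarrow>
     DL t12 i (f e) z = (if pos then t12 else - inverse t12) * f e z"
  using family unfolding qKZ_family_def by blast

lemma family_descent:
  "e \<in> Iset n N d \<Longrightarrow> Suc i < n \<Longrightarrow> e ! Suc i < e ! i \<Longrightarrow> torus n z \<Longrightarrow> z i \<noteq> z (Suc i) \<Longrightarrow>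
     DL t12 i (f e) z = f (e[i := e ! Suc i, Suc i := e ! i]) z"
  using family unfolding qKZ_family_def by blast

lemma family_cyclic:
  "e \<in> Iset n N d \<Longrightarrow> torus n z \<Longrightarrow> omega p n (f (last e # butlast e)) z = c (last e) * f e z"
  using family unfolding qKZ_family_def by blast

lemma t12_conv_if: "t12 = (if pos then of_real q else - inverse (of_real q))"
  using t12_conv_q by (auto split: if_splits)

lemma t12_nonzero: "t12 \<noteq> 0"
  using q_pos by (simp add: t12_conv_if)

lemma exch_coeffs:
  assumes "good q u"
  shows "t12\<^sup>2 * u \<noteq> 1"
    and "t12 * (u - 1) / (t12\<^sup>2 * u - 1) = exch_factor u
        * ((1 - u) * of_real q / (1 - of_real q ^ 2 * u))"
    and "(t12\<^sup>2 - 1) / (t12\<^sup>2 * u - 1) = exch_factor u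
        * ((1 - of_real q ^ 2) / (1 - of_real q ^ 2 * u))"
    and "(t12 * (u - 1) * (if pos then t12 else - inverse t12) + (t12\<^sup>2 - 1)) / (t12\<^sup>2 * u - 1)
       = exch_factor u"
proof -
  have q: "(of_real q :: complex) \<noteq> 0"
    using q_pos by simp
  have u: "1 - of_real q ^ 2 * u \<noteq> 0" "u - of_real q ^ 2 \<noteq> 0"
    using goodD[OF assms q_pos] by auto
  note plus = exch_coeffs_plus[OF q u(1)] and minus = exch_coeffs_minus[OF q u]
  show "t12\<^sup>2 * u \<noteq> 1"
    using u(1) minus(1) by (simp add: t12_conv_if)
  show "t12 * (u - 1) / (t12\<^sup>2 * u - 1) = exch_factor u
      * ((1 - u) * of_real q / (1 - of_real q ^ 2 * u))"
    using plus(1) minus(2) by (simp add: t12_conv_if exch_factor_def)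
  show "(t12\<^sup>2 - 1) / (t12\<^sup>2 * u - 1) = exch_factor u
      * ((1 - of_real q ^ 2) / (1 - of_real q ^ 2 * u))"
    using plus(2) minus(3) by (simp add: t12_conv_if exch_factor_def)
  show "(t12 * (u - 1) * (if pos then t12 else - inverse t12) + (t12\<^sup>2 - 1)) / (t12\<^sup>2 * u - 1)
       = exch_factor u"
    using plus(3) minus(4) by (simp add: t12_conv_if exch_factor_def)
qed

lemma good_ratio_neq:
  assumes "good q (y k / y (Suc k))"
  shows "y k \<noteq> y (Suc k)"
  using goodD(1,2)[OF assms q_pos] by auto

lemma f_swapz_descent:
  assumes "Suc k < n" "torus n y" "good q (y k / y (Suc k))" "e \<in> Iset n N d" "e ! Suc k < e ! k"
  defines "u \<equiv> y k / y (Suc k)"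
  shows "f e (swapz k y) = (t12 * (u - 1) * f (e[k := e ! Suc k, Suc k := e ! k]) y
      + (t12\<^sup>2 - 1) * f e y) / (t12\<^sup>2 * u - 1)"
proof (rule DL_relation_solve)
  show "t12 \<noteq> 0" "u \<noteq> 1" "t12\<^sup>2 * u \<noteq> 1"
    using t12_nonzero goodD(2)[OF assms(3) q_pos] exch_coeffs(1)[OF assms(3)] unfolding u_def
      by auto
  show "t12 * f e (swapz k y) + (t12 - inverse t12) / (u - 1) * (f e (swapz k y) - f e y)
      = f (e[k := e ! Suc k, Suc k := e ! k]) y"
    using family_descent[OF assms(4,1,5,2) good_ratio_neq[OF assms(3)]] unfolding DL_def u_def .
qed

lemma f_swapz_equal:
  assumes "Suc k < n" "torus n y" "good q (y k / y (Suc k))" "e \<in> Iset n N d" "e ! k = e ! Suc k"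
  shows "f e (swapz k y) = exch_factor (y k / y (Suc k)) * f e y"
proof -
  define u where "u = y k / y (Suc k)"
  define \<sigma> where "\<sigma> = (if pos then t12 else - inverse t12)"
  have "f e (swapz k y) = (t12 * (u - 1) * (\<sigma> * f e y) + (t12\<^sup>2 - 1) * f e y) / (t12\<^sup>2 * u - 1)"
  proof (rule DL_relation_solve)
    show "t12 \<noteq> 0" "u \<noteq> 1" "t12\<^sup>2 * u \<noteq> 1"
      using t12_nonzero goodD(2)[OF assms(3) q_pos] exch_coeffs(1)[OF assms(3)] unfolding u_def
        by auto
    show "t12 * f e (swapz k y) + (t12 - inverse t12) / (u - 1) * (f e (swapz k y) - f e y)
        = \<sigma> * f e y"
      using family_equal[OF assms(4,1,5,2) good_ratio_neq[OF assms(3)]]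
        unfolding DL_def u_def \<sigma>_def .
  qed
  also have "\<dots> = (t12 * (u - 1) * \<sigma> + (t12\<^sup>2 - 1)) / (t12\<^sup>2 * u - 1) * f e y"
    by (simp add: algebra_simps add_divide_distrib)
  also have "\<dots> = exch_factor u * f e y"
    using exch_coeffs(4)[OF assms(3)] unfolding u_def \<sigma>_def by (simp only:)
  finally show ?thesis
    unfolding u_def .
qed

lemma swap_adjacent_in_Iset:
  assumes "Suc k < n" "e \<in> Iset n N d"
  shows "e[k := e ! Suc k, Suc k := e ! k] \<in> Iset n N d"
  using permute_list_in_Iset_iff[OF transpose_Suc_permutes[OF assms(1)], of e N d]
    permute_list_transpose_Suc[of k e] assms Iset_imp_tidx[OF assms(2)] by (simp add: tidx_length)

lemma f_swapz_ascent:
  assumes "Suc k < n" "torus n y" "good q (y k / y (Suc k))" "e \<in> Iset n N d" "e ! k < e ! Suc k"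
  defines "u \<equiv> y k / y (Suc k)"
  shows "f e (swapz k y) = (t12 * (u - 1) * f (e[k := e ! Suc k, Suc k := e ! k]) y
      + (t12\<^sup>2 - 1) * u * f e y) / (t12\<^sup>2 * u - 1)"
proof -
  define e' where "e' = e[k := e ! Suc k, Suc k := e ! k]"
  have len: "length e = n"
    using Iset_imp_tidx[OF assms(4)] by (rule tidx_length)
  have e': "e' \<in> Iset n N d" "e' ! k = e ! Suc k" "e' ! Suc k = e ! k"
      "e'[k := e' ! Suc k, Suc k := e' ! k] = e"
    using swap_adjacent_in_Iset[OF assms(1,4)] len assms(1)
    unfolding e'_def by (simp_all add: list_update_swap list_update_id)
  have u: "u \<noteq> 0" "u \<noteq> 1" "t12\<^sup>2 * u \<noteq> 1"
    using goodD(1,2)[OF assms(3) q_pos] exch_coeffs(1)[OF assms(3)] unfolding u_def by auto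
  txt \<open>\<open>e'\<close> has a descent at \<open>k\<close>; its relation at the swapped point, whose ratio is
    \<open>1 / u\<close>, determines \<open>f e (swapz k y)\<close>.\<close>
  have "swapz k y k \<noteq> swapz k y (Suc k)"
    using good_ratio_neq[OF assms(3)] by (simp add: swapz_def)
  then have "DL t12 k (f e') (swapz k y) = f e (swapz k y)"
    using family_descent[OF e'(1) assms(1) _ torus_swapz[OF assms(1,2)]] e' assms(5) by simp
  then have "t12 * f e' y + (t12 - inverse t12) / (1 / u - 1) * (f e' y - f e' (swapz k y))
      = f e (swapz k y)"
    unfolding DL_def u_def by (simp add: swapz_def)
  moreover have "f e' (swapz k y) = (t12 * (u - 1) * f e y + (t12\<^sup>2 - 1) * f e' y)
      / (t12\<^sup>2 * u - 1)"
    using f_swapz_descent[OF assms(1-3) e'(1)] e' assms(5) unfolding u_def by simp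
  ultimately show ?thesis
    using DL_relation_solve_swapped[OF t12_nonzero u] unfolding e'_def by simp
qed

lemma f_swapz:
  assumes "Suc k < n" "torus n y" "good q (y k / y (Suc k))" "e \<in> Iset n N d"
  defines "u \<equiv> y k / y (Suc k)" and "a \<equiv> e ! Suc k" and "b \<equiv> e ! k"
  shows "f e (swapz k y) = exch_factor u * (if b = a then f e y else
      Rbar_ent q u a b a b * f (e[k := a, Suc k := b]) y + Rbar_ent q u a b b a * f e y)"
proof -
  note coeffs = exch_coeffs(2,3)[OF assms(3), folded u_def]
  consider "b = a" | "a < b" | "b < a"
    by linarith
  then show ?thesis
  proof cases
    case 1
    then show ?thesis
      using f_swapz_equal[OF assms(1-4)] unfolding u_def a_def b_def by simp
  next
    case 2
    then have "f e (swapz k y) = t12 * (u - 1) / (t12\<^sup>2 * u - 1) * f (e[k := a, Suc k := b]) y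
        + (t12\<^sup>2 - 1) / (t12\<^sup>2 * u - 1) * f e y"
      using f_swapz_descent[OF assms(1-4)] unfolding u_def a_def b_def
        by (simp add: add_divide_distrib)
    with 2 show ?thesis
      unfolding coeffs by (simp add: Rbar_ent_diag Rbar_ent_offdiag algebra_simps)
  next
    case 3
    then have "f e (swapz k y) = t12 * (u - 1) / (t12\<^sup>2 * u - 1) * f (e[k := a, Suc k := b]) y
        + (t12\<^sup>2 - 1) / (t12\<^sup>2 * u - 1) * u * f e y"
      using f_swapz_ascent[OF assms(1-4)] unfolding u_def a_def b_def
        by (simp add: add_divide_distrib)
    with 3 show ?thesis
      unfolding coeffs by (simp add: Rbar_ent_diag Rbar_ent_offdiag algebra_simps)
  qed
qed

lemma Ffun_swapz:
  assumes "Suc k < n" "torus n y" "good q (y k / y (Suc k))"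
  defines "u \<equiv> y k / y (Suc k)" and "\<tau> \<equiv> Transposition.transpose k (Suc k)"
  shows "F (swapz k y)
      = scale_tvec (exch_factor u) (permute_tvec \<tau> (Rbar_op q n N k (Suc k) u (F y)))"
proof
  fix e :: "nat list"
  define e' where "e' = permute_list \<tau> e"
  have "F (swapz k y) e = exch_factor u * Rbar_op q n N k (Suc k) u (F y) e'"
  proof (cases "e \<in> tidx n N")
    case True
    have len: "length e = n"
      using True by (rule tidx_length)
    then have e'_eq: "e' = e[k := e ! Suc k, Suc k := e ! k]"
      using permute_list_transpose_Suc[of k e] assms(1) unfolding e'_def \<tau>_def by simp
    have e': "e' \<in> tidx n N" "e' ! k = e ! Suc k" "e' ! Suc k = e ! k"
        "e'[k := e' ! Suc k, Suc k := e' ! k] = e"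
      using True len assms(1) unfolding e'_eq
      by (auto intro!: tidx_list_update tidx_nth_less simp: list_update_swap list_update_id)
    have e'_same: "e ! k = e ! Suc k \<Longrightarrow> e' = e"
      unfolding e'_eq by (metis list_update_id)
    have e'_Iset: "e' \<in> Iset n N d \<longleftrightarrow> e \<in> Iset n N d"
      unfolding e'_def \<tau>_def
        using permute_list_in_Iset_iff[OF transpose_Suc_permutes[OF assms(1)]] .
    show ?thesis
      using Rbar_op_apply[OF e'(1), of k "Suc k" q u "F y"] e' e'_same e'_Iset assms(1)
        f_swapz[OF assms(1-3), of e] unfolding u_def e'_eq[symmetric]
      by (auto simp: Ffun_def)
  next
    case False
    then have "e' \<notin> tidx n N"
      unfolding e'_def \<tau>_def
        using permute_list_in_tidx_iff[OF transpose_Suc_permutes[OF assms(1)]] by blast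
    with False show ?thesis
      using Iset_imp_tidx by (auto simp: Ffun_def Rbar_op_def)
  qed
  then show "F (swapz k y) e
      = scale_tvec (exch_factor u) (permute_tvec \<tau> (Rbar_op q n N k (Suc k) u (F y))) e"
    unfolding scale_tvec_def permute_tvec_def e'_def .
qed

end

section \<open>The qKZ equations with normalized R-matrices\<close>

text \<open>\<open>z \<circ> cycle_perm k\<close> moves the variable \<open>z 0\<close> to position \<open>k\<close>.\<close>
definition cycle_perm :: "nat \<Rightarrow> nat \<Rightarrow> nat" where
  "cycle_perm k i = (if i < k then Suc i else if i = k then 0 else i)"

lemma cycle_perm_0 [simp]: "cycle_perm 0 = id"
  unfolding cycle_perm_def by auto

lemma cycle_perm_Suc: "cycle_perm (Suc k) = cycle_perm k \<circ> Transposition.transpose k (Suc k)"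
  unfolding cycle_perm_def Transposition.transpose_def by (auto simp: fun_eq_iff)

lemma cycle_perm_Suc_apply: "cycle_perm (Suc k) k = Suc k" "cycle_perm (Suc k) (Suc k) = 0"
  unfolding cycle_perm_def by auto

lemma cycle_perm_permutes: "k < n \<Longrightarrow> cycle_perm k permutes {..<n}"
proof (induction k)
  case (Suc k)
  then show ?case
    unfolding cycle_perm_Suc by (intro permutes_compose transpose_Suc_permutes) auto
qed (simp add: permutes_id)

lemma permute_list_cycle_perm:
  assumes "length e = Suc k"
  shows "permute_list (cycle_perm k) e = tl e @ [hd e]"
proof (rule nth_equalityI)
  fix i
  assume "i < length (permute_list (cycle_perm k) e)"
  then show "permute_list (cycle_perm k) e ! i = (tl e @ [hd e]) ! i"
    using assms by (cases e) (auto simp: permute_list_def cycle_perm_def nth_append)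
qed (use assms in \<open>cases e; simp\<close>)

text \<open>The operator of \<open>qKZ_op\<close> with \<open>R\<close> replaced by \<open>Rbar\<close>; by unitarity the inverses
  \<open>Rinv\<^sub>k\<^sub>,\<^sub>m(w)\<close> become \<open>Rbar\<^sub>m\<^sub>,\<^sub>k(1/w)\<close> up to scalars (see \<open>Rinv_conv_Rbar_op\<close>).\<close>
definition qKZ_op_bar :: "real \<Rightarrow> real \<Rightarrow> nat \<Rightarrow> nat \<Rightarrow> (nat \<Rightarrow> complex) \<Rightarrow> nat \<Rightarrow> (nat \<Rightarrow> complex)
    \<Rightarrow> (nat list \<Rightarrow> complex) \<Rightarrow> (nat list \<Rightarrow> complex)" where
  "qKZ_op_bar q p n N kap m z = compose_ops
     (map (\<lambda>l. Rbar_op q n N m l (of_real p * z m / z l)) (rev [0..<m])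
      @ [Hop N kap m]
      @ map (\<lambda>k. Rbar_op q n N m k (z m / z k)) (rev [Suc m..<n]))"

lemma qKZ_op_bar_scale_tvec:
  "X \<in> tvecs n N \<Longrightarrow> qKZ_op_bar q p n N kap m z (scale_tvec c X)
      = scale_tvec c (qKZ_op_bar q p n N kap m z X)"
  unfolding qKZ_op_bar_def by (rule compose_ops_tvec_op(2)) (auto simp: tvec_op_Rbar_op tvec_op_Hop)

lemma permute_tvec_transpose_compose_ops:
  assumes "Suc m < n" "\<forall>l\<in>set ls. l < m" "\<forall>k\<in>set ks. Suc m < k \<and> k < n" "X \<in> tvecs n N"
  defines "\<tau> \<equiv> Transposition.transpose m (Suc m)"
  shows "permute_tvec \<tau> (compose_ops (map (\<lambda>l. Rbar_op q n N (Suc m) l (v l)) ls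
        @ [Hop N kap (Suc m)] @ map (\<lambda>k. Rbar_op q n N (Suc m) k (w k)) ks) X)
    = compose_ops (map (\<lambda>l. Rbar_op q n N m l (v l)) ls
        @ [Hop N kap m] @ map (\<lambda>k. Rbar_op q n N m k (w k)) ks) (permute_tvec \<tau> X)"
proof (rule permute_tvec_compose_ops)
  have \<tau>: "\<tau> permutes {..<n}" "\<tau> m = Suc m" "\<tau> (Suc m) = m" "\<And>k. k \<noteq> m \<Longrightarrow> k \<noteq> Suc m \<Longrightarrow> \<tau> k = k"
    unfolding \<tau>_def using transpose_Suc_permutes[OF assms(1)] by auto
  then show "list_all2 (\<lambda>A B. \<forall>X\<in>tvecs n N. permute_tvec \<tau> (A X) = B (permute_tvec \<tau> X))
      (map (\<lambda>l. Rbar_op q n N (Suc m) l (v l)) ls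
        @ [Hop N kap (Suc m)] @ map (\<lambda>k. Rbar_op q n N (Suc m) k (w k)) ks)
      (map (\<lambda>l. Rbar_op q n N m l (v l)) ls @ [Hop N kap m] @ map (\<lambda>k. Rbar_op q n N m k (w k)) ks)"
    using assms(1-3)
    by (intro list_all2_appendI) (auto simp: list_all2_map1 list_all2_map2 permute_tvec_Rbar_op
        permute_tvec_Hop intro!: list.rel_refl_strong)
qed (auto simp: tvec_op_Rbar_op tvec_op_Hop assms(4))

text \<open>Conjugation by the transposition of slots \<open>m, m + 1\<close> turns the factors of the \<open>m\<close>-th operator
  at \<open>swapz m z\<close> into those of the \<open>(m + 1)\<close>-st at \<open>z\<close>; the two factors acting on these slots
  cancel by unitarity.\<close>
lemma qKZ_op_bar_Suc:
  assumes "Suc m < n" "good q (z (Suc m) / z m)" "0 < q" "X \<in> tvecs n N"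
  defines "\<tau> \<equiv> Transposition.transpose m (Suc m)"
  shows "qKZ_op_bar q p n N kap (Suc m) z X
    = Rbar_op q n N (Suc m) m (of_real p * z (Suc m) / z m) (permute_tvec \<tau>
        (qKZ_op_bar q p n N kap m (swapz m z)
          (permute_tvec \<tau> (Rbar_op q n N m (Suc m) (z m / z (Suc m)) X))))"
proof -
  have \<tau>: "\<tau> permutes {..<n}" "\<tau> m = Suc m" "\<tau> (Suc m) = m"
    unfolding \<tau>_def using transpose_Suc_permutes[OF assms(1)] by auto
  define L where "L j = map (\<lambda>l. Rbar_op q n N j l (of_real p * z (Suc m) / z l)) (rev [0..<m])
      @ [Hop N kap j] @ map (\<lambda>k. Rbar_op q n N j k (z (Suc m) / z k)) (rev [Suc (Suc m)..<n])" for j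
  have split: "rev [Suc m..<n] = rev [Suc (Suc m)..<n] @ [Suc m]"
    using assms(1) by (simp add: upt_conv_Cons)
  have swapped: "map (\<lambda>l. Rbar_op q n N m l (of_real p * swapz m z m / swapz m z l)) (rev [0..<m])
      = map (\<lambda>l. Rbar_op q n N m l (of_real p * z (Suc m) / z l)) (rev [0..<m])"
    "map (\<lambda>k. Rbar_op q n N m k (swapz m z m / swapz m z k)) (rev [Suc (Suc m)..<n])
      = map (\<lambda>k. Rbar_op q n N m k (z (Suc m) / z k)) (rev [Suc (Suc m)..<n])"
    by (auto simp: swapz_def)
  have bar_swapz: "qKZ_op_bar q p n N kap m (swapz m z) Y
      = compose_ops (L m) (Rbar_op q n N m (Suc m) (z (Suc m) / z m) Y)" for Y
    unfolding qKZ_op_bar_def split map_append swapped L_def by (simp add: swapz_def)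
  have bar_Suc: "qKZ_op_bar q p n N kap (Suc m) z X
      = Rbar_op q n N (Suc m) m (of_real p * z (Suc m) / z m) (compose_ops (L (Suc m)) X)"
    unfolding qKZ_op_bar_def L_def by simp
  have "compose_ops (L m) (permute_tvec \<tau> X) = permute_tvec \<tau> (compose_ops (L (Suc m)) X)"
    unfolding L_def \<tau>_def using permute_tvec_transpose_compose_ops[OF assms(1) _ _ assms(4)] by simp
  moreover have "Rbar_op q n N m (Suc m) (z (Suc m) / z m)
      (permute_tvec \<tau> (Rbar_op q n N m (Suc m) (z m / z (Suc m)) X)) = permute_tvec \<tau> X"
    using Rbar_op_unitary_good(1)[OF assms(2,3) _ _ _ permute_tvec_in_tvecs[OF \<tau>(1) assms(4)],
        of m "Suc m"]
      permute_tvec_Rbar_op[OF \<tau>(1), of m "Suc m"] assms(1) \<tau> by simp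
  moreover have "permute_tvec \<tau> (permute_tvec \<tau> Y) = Y" if "Y \<in> tvecs n N" for Y
    using permute_tvec_comp[OF \<tau>(1) \<tau>(1) that] unfolding \<tau>_def
    by (simp add: Transposition.transpose_comp_involutory)
  moreover have "\<forall>A\<in>set (L (Suc m)). tvec_op n N A"
    unfolding L_def by (auto simp: tvec_op_Rbar_op tvec_op_Hop)
  ultimately show ?thesis
    unfolding bar_swapz bar_Suc using compose_ops_tvec_op(1) assms(4) by simp
qed

context qKZ_family_data
begin

lemma Ffun_cycle_step:
  assumes "generic q p n z" "Suc k < n"
  defines "u \<equiv> z (Suc k) / z 0"
  shows "permute_tvec (cycle_perm k) (F (z \<circ> cycle_perm k)) = scale_tvec (exch_factor u)
      (Rbar_op q n N (Suc k) 0 u (permute_tvec (cycle_perm (Suc k)) (F (z \<circ> cycle_perm (Suc k)))))"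
proof -
  define y where "y = z \<circ> cycle_perm (Suc k)"
  define \<tau> where "\<tau> = Transposition.transpose k (Suc k)"
  have \<tau>: "\<tau> permutes {..<n}" "\<tau> \<circ> \<tau> = id"
    unfolding \<tau>_def using transpose_Suc_permutes[OF assms(2)]
    by (auto simp: Transposition.transpose_comp_involutory)
  have cyc: "cycle_perm k permutes {..<n}" "cycle_perm (Suc k) permutes {..<n}"
    using assms(2) by (auto intro: cycle_perm_permutes)
  have y: "torus n y" "y k / y (Suc k) = u" "swapz k y = z \<circ> cycle_perm k"
    using torus_comp_permutes[OF cyc(2) genericD(1)[OF assms(1)]] \<tau>(2)
    unfolding y_def u_def swapz_conv_comp
    by (simp_all add: cycle_perm_Suc_apply, simp add: cycle_perm_Suc comp_assoc flip: \<tau>_def)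
  have "good q u"
    unfolding u_def using genericD(2)[OF assms(1), of "Suc k" 0] assms(2) by simp
  then have "F (z \<circ> cycle_perm k)
      = scale_tvec (exch_factor u) (permute_tvec \<tau> (Rbar_op q n N k (Suc k) u (F y)))"
    using Ffun_swapz[OF assms(2) y(1)] y(2,3) unfolding \<tau>_def by simp
  then have "permute_tvec (cycle_perm k) (F (z \<circ> cycle_perm k))
      = scale_tvec (exch_factor u)
        (permute_tvec (cycle_perm (Suc k)) (Rbar_op q n N k (Suc k) u (F y)))"
    using permute_tvec_comp[OF cyc(1) \<tau>(1) Rbar_op_in_tvecs]
    unfolding cycle_perm_Suc \<tau>_def by (simp add: permute_tvec_scale_tvec)
  then show ?thesis
    unfolding y_def using permute_tvec_Rbar_op[OF cyc(2), of k "Suc k"] assms(2)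
    by (simp add: cycle_perm_Suc_apply)
qed

lemma Ffun_cycle:
  assumes "generic q p n z" "k < n"
  shows "permute_tvec (cycle_perm k) (F (z \<circ> cycle_perm k))
    = scale_tvec (inverse (\<Prod>j\<in>{1..k}. exch_factor (z j / z 0)))
        (compose_ops (map (\<lambda>j. Rbar_op q n N 0 j (z 0 / z j)) (rev [1..<Suc k])) (F z))"
  using assms(2)
proof (induction k)
  case (Suc k)
  define u where "u = z (Suc k) / z 0"
  define V where "V = permute_tvec (cycle_perm (Suc k)) (F (z \<circ> cycle_perm (Suc k)))"
  have u: "good q u"
    unfolding u_def using genericD(2)[OF assms(1), of "Suc k" 0] Suc.prems by simp
  have "V \<in> tvecs n N"
    unfolding V_def using Suc.prems
      by (intro permute_tvec_in_tvecs cycle_perm_permutes Ffun_in_tvecs)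
  then have "Rbar_op q n N 0 (Suc k) (1 / u) (permute_tvec (cycle_perm k) (F (z \<circ> cycle_perm k)))
      = scale_tvec (exch_factor u) V"
    using Ffun_cycle_step[OF assms(1) Suc.prems]
      Rbar_op_unitary_good(2)[OF u q_pos, of 0 n "Suc k" V]
      Suc.prems unfolding u_def V_def by (simp add: Rbar_op_scale_tvec)
  then have V_eq: "V = scale_tvec (inverse (exch_factor u))
      (Rbar_op q n N 0 (Suc k) (1 / u) (permute_tvec (cycle_perm k) (F (z \<circ> cycle_perm k))))"
    using exch_factor_nonzero[OF u] by (simp add: Rbar_op_scale_tvec)
  have "(\<Prod>j\<in>{1..Suc k}. exch_factor (z j / z 0)) = exch_factor u
      * (\<Prod>j\<in>{1..k}. exch_factor (z j / z 0))"
    unfolding u_def by (simp add: prod.cl_ivl_Suc)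
  moreover have "rev [1..<Suc (Suc k)] = Suc k # rev [1..<Suc k]"
    by simp
  moreover have "1 / u = z 0 / z (Suc k)"
    unfolding u_def by simp
  ultimately show ?case
    unfolding V_def[symmetric] V_eq Suc.IH[OF Suc_lessD[OF Suc.prems]]
    by (simp add: Rbar_op_scale_tvec mult.commute u_def)
qed simp

end

locale qKZ_solution_data = qKZ_family_data +
  fixes C :: complex
  assumes N_pos: "0 < N"
    and c_prod_nonzero: "(\<Prod>l<N. c l) \<noteq> 0"
    and C_root: "C ^ N = (\<Prod>l<N. c l)"
begin

definition exch_scalar :: "nat \<Rightarrow> (nat \<Rightarrow> complex) \<Rightarrow> complex" where
  "exch_scalar m z = (\<Prod>l<m. exch_factor (of_real p * z m / z l))
      / (\<Prod>k\<in>{Suc m..<n}. exch_factor (z k / z m))"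

lemma C_nonzero: "C \<noteq> 0"
  using C_root c_prod_nonzero N_pos by (metis power_0_left gr_implies_not0)

lemma kapext_kappa: "j \<le> N \<Longrightarrow> kapext N (kappa c C) j = kappa c C j"
  unfolding kapext_def kappa_def using C_root C_nonzero by auto

lemma C_mult_kappa_ratio:
  assumes "j < N"
  shows "C * (kapext N (kappa c C) (Suc j) / kapext N (kappa c C) j) = c j"
proof -
  have "(\<Prod>l<j. c l) \<noteq> 0"
    using c_prod_nonzero assms by (simp add: prod_zero_iff)
  then show ?thesis
    using assms C_nonzero by (simp add: kapext_kappa kappa_def field_simps)
qed

lemma omega_cycle_perm:
  assumes "0 < n"
  shows "omega p n g (z \<circ> cycle_perm (n - 1)) = g (z(0 := of_real p * z 0))"
  unfolding omega_def comp_apply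
  by (rule arg_cong[where f = g]) (use assms in \<open>auto simp: cycle_perm_def fun_eq_iff Suc_diff_Suc\<close>)

lemma Ffun_shift_first_cyclic:
  assumes "generic q p n z" "0 < n"
  shows "F (z(0 := of_real p * z 0))
    = scale_tvec C
      (Hop N (kappa c C) 0 (permute_tvec (cycle_perm (n - 1)) (F (z \<circ> cycle_perm (n - 1)))))"
proof
  fix e :: "nat list"
  define w where "w = z \<circ> cycle_perm (n - 1)"
  define e' where "e' = permute_list (cycle_perm (n - 1)) e"
  have e'_Iset: "e' \<in> Iset n N d \<longleftrightarrow> e \<in> Iset n N d"
    unfolding e'_def using permute_list_in_Iset_iff[OF cycle_perm_permutes] assms(2) by simp
  show "F (z(0 := of_real p * z 0)) e
      = scale_tvec C (Hop N (kappa c C) 0 (permute_tvec (cycle_perm (n - 1)) (F w))) e"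
  proof (cases "e \<in> Iset n N d")
    case True
    have len: "length e = Suc (n - 1)"
      using tidx_length[OF Iset_imp_tidx[OF True]] assms(2) by simp
    then have e': "last e' # butlast e' = e" "last e' = e ! 0"
      unfolding e'_def permute_list_cycle_perm[OF len] by (cases e; simp)+
    have "e ! 0 < N"
      using tidx_nth_less[OF Iset_imp_tidx[OF True], of 0] assms(2) by simp
    moreover have "f e (z(0 := of_real p * z 0)) = c (e ! 0) * f e' w"
      using family_cyclic[of e' w] e' e'_Iset True
        torus_comp_permutes[OF cycle_perm_permutes genericD(1)[OF assms(1)], of "n - 1"] assms(2)
      unfolding w_def omega_cycle_perm[OF assms(2)] by simp
    ultimately have "f e (z(0 := of_real p * z 0))
        = C * (kapext N (kappa c C) (Suc (e ! 0)) / kapext N (kappa c C) (e ! 0) * f e' w)"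
      using C_mult_kappa_ratio[of "e ! 0"] by (metis mult.assoc)
    then show ?thesis
      using True e'_Iset unfolding scale_tvec_def Hop_def permute_tvec_def e'_def[symmetric]
      by (simp add: Ffun_def)
  next
    case False
    then show ?thesis
      using e'_Iset unfolding scale_tvec_def Hop_def permute_tvec_def e'_def[symmetric]
      by (simp add: Ffun_def)
  qed
qed

lemma Ffun_shift_first:
  assumes "generic q p n z" "0 < n"
  shows "F (z(0 := of_real p * z 0))
      = scale_tvec (C * exch_scalar 0 z) (qKZ_op_bar q p n N (kappa c C) 0 z (F z))"
proof -
  define L where "L = map (\<lambda>j. Rbar_op q n N 0 j (z 0 / z j)) (rev [1..<n])"
  define P where "P = (\<Prod>j\<in>{1..n - 1}. exch_factor (z j / z 0))"
  have "P \<noteq> 0"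
    unfolding P_def using genericD(2)[OF assms(1)] exch_factor_nonzero by (auto simp: prod_zero_iff)
  moreover have "permute_tvec (cycle_perm (n - 1)) (F (z \<circ> cycle_perm (n - 1)))
      = scale_tvec (inverse P) (compose_ops L (F z))"
    using Ffun_cycle[OF assms(1), of "n - 1"] assms(2) unfolding L_def P_def by simp
  moreover have "exch_scalar 0 z = inverse P"
    using assms(2) unfolding exch_scalar_def P_def
    by (simp add: atLeastLessThanSuc_atLeastAtMost[symmetric] field_simps)
  moreover have "qKZ_op_bar q p n N (kappa c C) 0 z X = Hop N (kappa c C) 0 (compose_ops L X)" for X
    unfolding qKZ_op_bar_def L_def by simp
  ultimately show ?thesis
    unfolding Ffun_shift_first_cyclic[OF assms] by (simp add: Hop_scale_tvec)
qed

lemma exch_scalar_swapz: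
  assumes "Suc m < n" "generic q p n z"
  shows "exch_factor (of_real p * z (Suc m) / z m) * exch_scalar m (swapz m z)
      * exch_factor (z m / z (Suc m))
    = exch_scalar (Suc m) z"
proof -
  have "exch_factor (z m / z (Suc m)) \<noteq> 0"
    using exch_factor_nonzero genericD(2)[OF assms(2), of m "Suc m"] assms(1) by simp
  moreover have "(\<Prod>l<m. exch_factor (of_real p * swapz m z m / swapz m z l))
      = (\<Prod>l<m. exch_factor (of_real p * z (Suc m) / z l))"
    by (intro prod.cong) (auto simp: swapz_def)
  moreover have "(\<Prod>k\<in>{Suc m..<n}. exch_factor (swapz m z k / swapz m z m))
      = exch_factor (swapz m z (Suc m) / swapz m z m)
        * (\<Prod>k\<in>{Suc (Suc m)..<n}. exch_factor (swapz m z k / swapz m z m))"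
    using assms(1) by (simp add: prod.atLeast_Suc_lessThan)
  moreover have "(\<Prod>k\<in>{Suc (Suc m)..<n}. exch_factor (swapz m z k / swapz m z m))
      = (\<Prod>k\<in>{Suc (Suc m)..<n}. exch_factor (z k / z (Suc m)))"
    by (intro prod.cong) (auto simp: swapz_def)
  moreover have "swapz m z (Suc m) = z m" "swapz m z m = z (Suc m)"
    by (simp_all add: swapz_def)
  ultimately show ?thesis
    unfolding exch_scalar_def by (simp add: field_simps)
qed

lemma Ffun_shift_Suc:
  assumes "Suc m < n" "generic q p n z"
    and IH: "\<And>z. generic q p n z \<Longrightarrow>
      F (z(m := of_real p * z m))
        = scale_tvec (C * exch_scalar m z) (qKZ_op_bar q p n N (kappa c C) m z (F z))"
  shows "F (z(Suc m := of_real p * z (Suc m)))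
    = scale_tvec (C * exch_scalar (Suc m) z) (qKZ_op_bar q p n N (kappa c C) (Suc m) z (F z))"
proof -
  define \<tau> where "\<tau> = Transposition.transpose m (Suc m)"
  define s where "s = swapz m z"
  define y where "y = s(m := of_real p * s m)"
  define u1 u2 where "u1 = of_real p * z (Suc m) / z m" and "u2 = z m / z (Suc m)"
  have \<tau>: "\<tau> permutes {..<n}" "\<tau> m = Suc m" "\<tau> (Suc m) = m"
    unfolding \<tau>_def using transpose_Suc_permutes[OF assms(1)] by auto
  have s: "generic q p n s" "s m = z (Suc m)"
    using generic_comp_permutes[OF \<tau>(1) assms(2)] unfolding s_def swapz_conv_comp \<tau>_def by simp_all
  have good: "good q u1" "good q u2" "good q (z (Suc m) / z m)"
    unfolding u1_def u2_def using genericD(2,3)[OF assms(2)] assms(1) by auto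
  have y: "torus n y" "y m / y (Suc m) = u1" "swapz m y = z(Suc m := of_real p * z (Suc m))"
    using genericD(1)[OF s(1)] goodD(1)[OF good(1) q_pos] assms(1)
    unfolding y_def s_def u1_def torus_def by (auto simp: swapz_def fun_eq_iff)
  let ?Q = "qKZ_op_bar q p n N (kappa c C) m s"
  have E1: "F (z(Suc m := of_real p * z (Suc m)))
      = scale_tvec (exch_factor u1) (permute_tvec \<tau> (Rbar_op q n N m (Suc m) u1 (F y)))"
    using Ffun_swapz[OF assms(1) y(1)] y(2,3) good(1) unfolding \<tau>_def by simp
  have E2: "F y = scale_tvec (C * exch_scalar m s) (?Q (F s))"
    unfolding y_def by (rule IH[OF s(1)])
  have E3: "F s = scale_tvec (exch_factor u2) (permute_tvec \<tau> (Rbar_op q n N m (Suc m) u2 (F z)))"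
    using Ffun_swapz[OF assms(1) genericD(1)[OF assms(2)]] good(2) unfolding s_def u2_def \<tau>_def
      by simp
  have "F (z(Suc m := of_real p * z (Suc m)))
      = scale_tvec (exch_factor u1 * (C * exch_scalar m s) * exch_factor u2)
          (permute_tvec \<tau>
            (Rbar_op q n N m (Suc m) u1 (?Q (permute_tvec \<tau> (Rbar_op q n N m (Suc m) u2 (F z))))))"
    unfolding E1 E2 E3
    by (simp add: Rbar_op_scale_tvec permute_tvec_scale_tvec qKZ_op_bar_scale_tvec
        permute_tvec_in_tvecs[OF \<tau>(1)] Rbar_op_in_tvecs mult.assoc)
  also have "\<dots> = scale_tvec (exch_factor u1 * (C * exch_scalar m s) * exch_factor u2)
          (Rbar_op q n N (Suc m) m u1
            (permute_tvec \<tau> (?Q (permute_tvec \<tau> (Rbar_op q n N m (Suc m) u2 (F z))))))"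
    using permute_tvec_Rbar_op[OF \<tau>(1), of m "Suc m"] assms(1) \<tau>(2,3) by simp
  also have "\<dots>
      = scale_tvec (C * exch_scalar (Suc m) z) (qKZ_op_bar q p n N (kappa c C) (Suc m) z (F z))"
    using qKZ_op_bar_Suc[OF assms(1) good(3) q_pos Ffun_in_tvecs] exch_scalar_swapz[OF assms(1,2)]
    unfolding s_def u1_def u2_def \<tau>_def by (simp add: ac_simps)
  finally show ?thesis .
qed

lemma Ffun_shift:
  "m < n \<Longrightarrow> generic q p n z \<Longrightarrow>
    F (z(m := of_real p * z m))
      = scale_tvec (C * exch_scalar m z) (qKZ_op_bar q p n N (kappa c C) m z (F z))"
proof (induction m arbitrary: z)
  case 0
  then show ?case
    by (intro Ffun_shift_first) auto
next
  case (Suc m)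
  show ?case
    by (rule Ffun_shift_Suc[OF Suc.prems Suc.IH[OF Suc_lessD[OF Suc.prems(1)]]])
qed

end

section \<open>Absorbing the scalar factors into \<open>K\<close>\<close>

lemma Rop_conv_Rbar_op: "Rop q n N m l w X = scale_tvec (rfun q N w) (Rbar_op q n N m l w X)"
  unfolding Rop_def Rbar_op_def scale_tvec_def by (auto simp: sum_distrib_left algebra_simps)

lemma Rinv_conv_Rbar_op:
  assumes "good q w" "0 < q" "q < 1" "0 < N" "k < n" "m < n" "k \<noteq> m" "X \<in> tvecs n N"
  shows "Rinv q n N k m w X = scale_tvec (inverse (rfun q N w)) (Rbar_op q n N m k (1 / w) X)"
proof -
  have r: "rfun q N w \<noteq> 0"
    using rfun_nonzero[OF assms(1-3)] assms(4) by simp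
  have "inj_on (Rop q n N k m w) (tvecs n N)"
  proof (rule inj_onI)
    fix Y1 Y2
    assume Y: "Y1 \<in> tvecs n N" "Y2 \<in> tvecs n N" "Rop q n N k m w Y1 = Rop q n N k m w Y2"
    then have "Rbar_op q n N k m w Y1 = Rbar_op q n N k m w Y2"
      using r unfolding Rop_conv_Rbar_op scale_tvec_def by (auto simp: fun_eq_iff)
    then show "Y1 = Y2"
      using Rbar_op_unitary_good(2)[OF assms(1,2,6,5) assms(7)[symmetric]] Y(1,2) by metis
  qed
  moreover have "Rop q n N k m w (scale_tvec (inverse (rfun q N w)) (Rbar_op q n N m k (1 / w) X))
      = X"
    using Rbar_op_unitary_good(1)[OF assms(1,2,5-8)] r
      by (simp add: Rop_conv_Rbar_op Rbar_op_scale_tvec)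
  ultimately show ?thesis
    unfolding Rinv_def by (intro the_inv_into_f_eq scale_tvec_in_tvecs Rbar_op_in_tvecs)
qed

definition rfun_scalar :: "real \<Rightarrow> real \<Rightarrow> nat \<Rightarrow> nat \<Rightarrow> nat \<Rightarrow> (nat \<Rightarrow> complex) \<Rightarrow> complex" where
  "rfun_scalar q p n N m z = (\<Prod>l<m. rfun q N (of_real p * z m / z l))
     * (\<Prod>k\<in>{Suc m..<n}. inverse (rfun q N (z k / z m)))"

lemma prod_list_map_rev_upt: "prod_list (map g (rev [a..<b])) = (\<Prod>i\<in>{a..<b}. g i)"
  by (simp add: prod.distinct_set_conv_list[symmetric])

lemma qKZ_op_conv_qKZ_op_bar:
  assumes "0 < q" "q < 1" "0 < N" "m < n" "generic q p n z" "X \<in> tvecs n N"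
  shows "qKZ_op q p n N kap m z X
      = scale_tvec (rfun_scalar q p n N m z) (qKZ_op_bar q p n N kap m z X)"
proof -
  define LA where "LA = map (\<lambda>l. Rbar_op q n N m l (of_real p * z m / z l)) (rev [0..<m])"
  define LB where "LB = map (\<lambda>k. Rbar_op q n N m k (z m / z k)) (rev [Suc m..<n])"
  have LA_op: "\<forall>A\<in>set LA. tvec_op n N A" and LB_op: "\<forall>A\<in>set LB. tvec_op n N A"
    unfolding LA_def LB_def by (auto simp: tvec_op_Rbar_op)
  have A: "compose_ops (map (\<lambda>l. Rop q n N m l (of_real p * z m / z l)) (rev [0..<m])) Y
      = scale_tvec (\<Prod>l<m. rfun q N (of_real p * z m / z l)) (compose_ops LA Y)"
    if "Y \<in> tvecs n N" for Y
    using compose_ops_map_scale[of "rev [0..<m]" n N, OF _ _ that] unfolding LA_def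
    by (simp add: Rop_conv_Rbar_op tvec_op_Rbar_op prod_list_map_rev_upt atLeast0LessThan)
  have B: "compose_ops (map (\<lambda>k. Rinv q n N k m (z k / z m)) (rev [Suc m..<n])) Y
      = scale_tvec (\<Prod>k\<in>{Suc m..<n}. inverse (rfun q N (z k / z m))) (compose_ops LB Y)"
    if "Y \<in> tvecs n N" for Y
    using compose_ops_map_scale[of "rev [Suc m..<n]" n N, OF _ _ that] unfolding LB_def
    using Rinv_conv_Rbar_op[OF genericD(2)[OF assms(5)] assms(1-3), of _ m] assms(4)
    by (simp add: tvec_op_Rbar_op prod_list_map_rev_upt)
  have H: "Hop N kap m (compose_ops LB X) \<in> tvecs n N"
    by (intro Hop_in_tvecs compose_ops_tvec_op(1)[OF LB_op assms(6)])
  show ?thesis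
    unfolding qKZ_op_def qKZ_op_bar_def LA_def[symmetric] LB_def[symmetric] compose_ops_append
    using A[OF scale_tvec_in_tvecs[OF H]] B[OF assms(6)] compose_ops_tvec_op(2)[OF LA_op H]
    by (simp add: Hop_scale_tvec rfun_scalar_def mult.commute)
qed

lemma prod_powr_fun_upd:
  fixes z :: "nat \<Rightarrow> complex"
  assumes "m < n" "0 < p"
  shows "(\<Prod>a<n. (z(m := of_real p * z m)) a powr (\<alpha> + \<beta> * of_nat (Suc a)))
     = (\<Prod>a<n. z a powr (\<alpha> + \<beta> * of_nat (Suc a))) * of_real p powr (\<alpha> + \<beta> * of_nat (Suc m))"
proof -
  have "(\<Prod>a<n. (z(m := of_real p * z m)) a powr (\<alpha> + \<beta> * of_nat (Suc a)))
      = (\<Prod>a<n. (if a = m then of_real p powr (\<alpha> + \<beta> * of_nat (Suc a)) else 1)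
        * z a powr (\<alpha> + \<beta> * of_nat (Suc a)))"
    using assms(2) by (intro prod.cong) (auto simp: powr_times_real_left)
  then show ?thesis
    using assms(1) by (simp add: prod.distrib prod.delta mult.commute)
qed

lemma prod_pairs_fun_upd:
  fixes z :: "nat \<Rightarrow> complex" and h :: "complex \<Rightarrow> complex"
  assumes "m < n" "\<And>a b. a < b \<Longrightarrow> b < n \<Longrightarrow> h (z b / z a) \<noteq> 0"
  shows "(\<Prod>b<n. \<Prod>a<b. h ((z(m := P * z m)) b / (z(m := P * z m)) a))
     = (\<Prod>b<n. \<Prod>a<b. h (z b / z a))
       * (\<Prod>l<m. h (P * z m / z l) / h (z m / z l))
         * (\<Prod>k\<in>{Suc m..<n}. h (z k / (P * z m)) / h (z k / z m))"
proof -
  define R where "R b a = (if b = m then h (P * z m / z a) / h (z m / z a)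
     else if a = m then h (z b / (P * z m)) / h (z b / z m) else 1)" for b a
  have "(\<Prod>b<n. \<Prod>a<b. h ((z(m := P * z m)) b / (z(m := P * z m)) a))
      = (\<Prod>b<n. \<Prod>a<b. h (z b / z a) * R b a)"
    using assms(2) unfolding R_def by (intro prod.cong refl) auto
  also have "\<dots> = (\<Prod>b<n. \<Prod>a<b. h (z b / z a)) * (\<Prod>b<n. \<Prod>a<b. R b a)"
    by (simp add: prod.distrib)
  also have "(\<Prod>b<n. \<Prod>a<b. R b a)
      = (\<Prod>b<n. (if b = m then \<Prod>l<m. h (P * z m / z l) / h (z m / z l) else 1)
      * (if m < b then h (z b / (P * z m)) / h (z b / z m) else 1))"
    unfolding R_def by (intro prod.cong refl) (auto simp: prod.delta)
  also have "\<dots> = (\<Prod>l<m. h (P * z m / z l) / h (z m / z l))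
      * (\<Prod>k\<in>{Suc m..<n}. h (z k / (P * z m)) / h (z k / z m))"
  proof -
    have "{b \<in> {..<n}. m < b} = {Suc m..<n}"
      by auto
    then show ?thesis
      using assms(1) by (simp add: prod.distrib prod.delta prod.inter_filter[symmetric])
  qed
  finally show ?thesis
    by (simp add: mult.assoc)
qed

lemma Kfun_fun_upd:
  assumes "m < n" "0 < p" "\<And>a b. a < b \<Longrightarrow> b < n \<Longrightarrow> h (z b / z a) \<noteq> 0"
  shows "Kfun \<alpha> \<beta> h n (z(m := of_real p * z m)) = Kfun \<alpha> \<beta> h n z
      * of_real p powr (\<alpha> + \<beta> * of_nat (Suc m))
      * (\<Prod>l<m. h (of_real p * z m / z l) / h (z m / z l))
      * (\<Prod>k\<in>{Suc m..<n}. h (z k / (of_real p * z m)) / h (z k / z m))"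
  unfolding Kfun_def prod_powr_fun_upd[OF assms(1,2)]
  by (subst prod_pairs_fun_upd[where h = h and z = z and P = "of_real p", OF assms(1,3)])
    (simp_all add: mult_ac)

lemma powr_gauge_identity:
  fixes \<alpha> \<beta> C s :: complex and p q \<gamma> :: real
  assumes "0 < p" "0 < q" "m < n" "C \<noteq> 0" "s\<^sup>2 = 1"
    and "of_real p powr \<alpha> = s ^ (n - 1) * inverse C * of_real (q powr (- (real n + 1) * \<gamma>))"
    and "of_real p powr \<beta> = of_real (q powr (2 * \<gamma>))"
  shows "of_real p powr (\<alpha> + \<beta> * of_nat (Suc m)) * C * (s * of_real (q powr \<gamma>)) ^ (n - Suc m)
      / (s * of_real (q powr \<gamma>)) ^ m = 1"
proof -
  have p: "(of_real p :: complex) \<noteq> 0"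
    using assms(1) by simp
  have "of_real p powr (\<alpha> + \<beta> * of_nat (Suc m)) = of_real p powr \<alpha> * (of_real p powr \<beta>) ^ Suc m"
    using powr_power[OF p, of \<beta> "Suc m"] by (simp add: powr_add mult.commute)
  moreover have "s ^ (n - 1) * s ^ (n - Suc m) = s ^ m"
  proof -
    have "n - 1 = m + (n - Suc m)"
      using assms(3) by simp
    moreover have "(s ^ (n - Suc m))\<^sup>2 = (s\<^sup>2) ^ (n - Suc m)"
      by (simp only: power_mult[symmetric] mult.commute)
    ultimately show ?thesis
      using assms(5) by (simp add: power_add power2_eq_square)
  qed
  moreover have "q powr (- (real n + 1) * \<gamma>) * (q powr (2 * \<gamma>)) ^ Suc m * (q powr \<gamma>) ^ (n - Suc m)
      = (q powr \<gamma>) ^ m"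
  proof -
    have q: "q \<noteq> 0"
      using assms(2) by simp
    have "q powr (- (real n + 1) * \<gamma>) * (q powr (2 * \<gamma>)) ^ Suc m * (q powr \<gamma>) ^ (n - Suc m)
        = q powr (- (real n + 1) * \<gamma> + real (Suc m) * (2 * \<gamma>) + real (n - Suc m) * \<gamma>)"
      by (simp only: powr_power[OF q] powr_add[symmetric])
    also have "\<dots> = q powr (real m * \<gamma>)"
      using assms(3) by (simp add: of_nat_diff algebra_simps)
    finally show ?thesis
      using q by (simp add: powr_power)
  qed
  moreover have "s \<noteq> 0"
    using assms(5) by auto
  ultimately show ?thesis
    using assms(4,6,7) assms(2)
    by (simp add: power_mult_distrib field_simps flip: of_real_power of_real_mult)
qed

context qKZ_solution_data
begin

definition rfun_gauge :: complex where
  "rfun_gauge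
      = (if pos then of_real (q powr (1 / real N - 1)) else - of_real (q powr (1 + 1 / real N)))"

lemma rfun_gauge_nonzero: "rfun_gauge \<noteq> 0"
  using q_pos by (simp add: rfun_gauge_def)

lemma h_den_div_h_num_mult_exch_factor:
  assumes "good q x"
  shows "h_den pos q N x / h_num q N x * exch_factor x = rfun q N x / rfun_gauge"
proof (cases pos)
  case True
  then show ?thesis
    using q_pos unfolding exch_factor_def rfun_gauge_def rfun_conv_h by simp
next
  case False
  have N: "1 \<le> N"
    using N_pos by simp
  have q: "(of_real q :: complex) \<noteq> 0"
    using q_pos by simp
  have x: "x - of_real q ^ 2 \<noteq> 0"
    using goodD(3)[OF assms q_pos] by simp
  have "q powr (1 / real N - 1) / q powr (1 + 1 / real N) = inverse (q\<^sup>2)"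
    using q_pos by (simp add: powr_diff[symmetric] powr_minus powr_realpow[of q 2, simplified])
  then have gauge: "of_real (q powr (1 / real N - 1)) / rfun_gauge = - inverse (of_real q ^ 2)"
    using False q_pos unfolding rfun_gauge_def by (simp flip: of_real_divide of_real_power)
  have "h_den pos q N x / h_num q N x * exch_factor x
      = h_den True q N x * (1 - inverse (of_real q ^ 2) * x) / (h_num q N x * (x - of_real q ^ 2))"
    using False h_den_False_conv_True[OF assms q_pos q_less_1 N] unfolding exch_factor_def
    by (simp add: mult.commute)
  also have "\<dots> = - inverse (of_real q ^ 2) * h_den True q N x / h_num q N x"
  proof -
    have "1 - inverse (of_real q ^ 2) * x = - inverse (of_real q ^ 2) * (x - of_real q ^ 2)"
      using q by (simp add: field_simps)
    moreover have "a * (b * (x - of_real q ^ 2)) / (c * (x - of_real q ^ 2)) = b * a / c"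
      for a b c :: complex
      using x by simp
    ultimately show ?thesis
      by simp
  qed
  also have "\<dots> = rfun q N x / rfun_gauge"
  proof -
    have "rfun q N x / rfun_gauge
        = of_real (q powr (1 / real N - 1)) / rfun_gauge * (h_den True q N x / h_num q N x)"
      unfolding rfun_conv_h by simp
    then show ?thesis
      unfolding gauge by simp
  qed
  finally show ?thesis .
qed

lemma gauge_identity:
  assumes "0 < p" "m < n"
    and "if pos then
           of_real p powr \<alpha> = inverse C * of_real (q powr (- (real n + 1) * (1 / real N - 1)))
         \<and> of_real p powr \<beta> = of_real (q powr (2 * (1 / real N - 1)))
         else
           of_real p powr \<alpha> = (-1) ^ (n - 1) * inverse C
             * of_real (q powr (- (real n + 1) * (1 + 1 / real N)))
         \<and> of_real p powr \<beta> = of_real (q powr (2 * (1 + 1 / real N)))"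
  shows "of_real p powr (\<alpha> + \<beta> * of_nat (Suc m)) * C * rfun_gauge ^ (n - Suc m) / rfun_gauge ^ m
      = 1"
proof (cases pos)
  case True
  then show ?thesis
    using powr_gauge_identity[OF assms(1) q_pos assms(2) C_nonzero, of 1 \<alpha> "1 / real N - 1" \<beta>]
      assms(3)
    unfolding rfun_gauge_def by simp
next
  case False
  then show ?thesis
    using powr_gauge_identity[OF assms(1) q_pos assms(2) C_nonzero, of "-1" \<alpha> "1 + 1 / real N" \<beta>]
      assms(3)
    unfolding rfun_gauge_def by simp
qed

lemma h_shift_ratio:
  assumes h: "\<forall>z. good q z \<longrightarrow> h (z / of_real p) / h z = h_num q N z / h_den pos q N z"
    and x: "good q x"
  shows "h x \<noteq> 0"
    and "h x / h (x / of_real p) * exch_factor x = rfun q N x / rfun_gauge"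
    and "h (x / of_real p) / h x / exch_factor x = rfun_gauge / rfun q N x"
proof -
  have N: "1 \<le> N"
    using N_pos by simp
  have ratio: "h (x / of_real p) / h x = h_num q N x / h_den pos q N x"
    using h x by blast
  then show "h x \<noteq> 0"
    using h_num_nonzero[OF x q_pos q_less_1 N] h_den_nonzero[OF x q_pos q_less_1 N, of pos]
    by (metis divide_eq_0_iff)
  have "h x / h (x / of_real p) = inverse (h (x / of_real p) / h x)"
    by simp
  then show "h x / h (x / of_real p) * exch_factor x = rfun q N x / rfun_gauge"
    unfolding ratio using h_den_div_h_num_mult_exch_factor[OF x] by simp
  have "h (x / of_real p) / h x / exch_factor x = inverse (h x / h (x / of_real p) * exch_factor x)"
    by (simp add: inverse_mult_distrib divide_inverse)
  then show "h (x / of_real p) / h x / exch_factor x = rfun_gauge / rfun q N x"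
    unfolding \<open>h x / h (x / of_real p) * exch_factor x = rfun q N x / rfun_gauge\<close> by simp
qed

lemma Kfun_fun_upd_mult_exch_scalar:
  assumes "0 < p" "m < n" "generic q p n z"
    and h: "\<forall>z. good q z \<longrightarrow> h (z / of_real p) / h z = h_num q N z / h_den pos q N z"
    and powrs: "if pos then
           of_real p powr \<alpha> = inverse C * of_real (q powr (- (real n + 1) * (1 / real N - 1)))
         \<and> of_real p powr \<beta> = of_real (q powr (2 * (1 / real N - 1)))
         else
           of_real p powr \<alpha> = (-1) ^ (n - 1) * inverse C
             * of_real (q powr (- (real n + 1) * (1 + 1 / real N)))
         \<and> of_real p powr \<beta> = of_real (q powr (2 * (1 + 1 / real N)))"
  shows "Kfun \<alpha> \<beta> h n (z(m := of_real p * z m)) * (C * exch_scalar m z)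
    = rfun_scalar q p n N m z * Kfun \<alpha> \<beta> h n z"
proof -
  define g where "g = rfun_gauge"
  have div_p: "of_real p * z m / z l / of_real p = z m / z l"
      "z k / z m / of_real p = z k / (of_real p * z m)"
    for k l
    using assms(1) by simp_all
  have low: "h (of_real p * z m / z l) / h (z m / z l) * exch_factor (of_real p * z m / z l)
      = rfun q N (of_real p * z m / z l) / g" if "l < m" for l
    using h_shift_ratio(2)[OF h genericD(3)[OF assms(3), of m l], unfolded div_p] that assms(2)
    unfolding g_def by simp
  have high: "h (z k / (of_real p * z m)) / h (z k / z m) / exch_factor (z k / z m)
      = g / rfun q N (z k / z m)" if "k \<in> {Suc m..<n}" for k
    using h_shift_ratio(3)[OF h genericD(2)[OF assms(3), of k m], unfolded div_p] that
    unfolding g_def by simp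
  have "Kfun \<alpha> \<beta> h n (z(m := of_real p * z m)) * (C * exch_scalar m z)
      = Kfun \<alpha> \<beta> h n z * (of_real p powr (\<alpha> + \<beta> * of_nat (Suc m)) * C)
        * (\<Prod>l<m. h (of_real p * z m / z l) / h (z m / z l) * exch_factor (of_real p * z m / z l))
        * (\<Prod>k\<in>{Suc m..<n}. h (z k / (of_real p * z m)) / h (z k / z m) / exch_factor (z k / z m))"
    using Kfun_fun_upd[OF assms(2,1), of h z \<alpha> \<beta>] genericD(2)[OF assms(3)] h_shift_ratio(1)[OF h]
    unfolding exch_scalar_def by (simp add: prod.distrib prod_dividef field_simps)
  also have "\<dots> = Kfun \<alpha> \<beta> h n z
      * (of_real p powr (\<alpha> + \<beta> * of_nat (Suc m)) * C * g ^ (n - Suc m) / g ^ m)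
        * rfun_scalar q p n N m z"
    unfolding rfun_scalar_def using low high by (simp add: prod.distrib prod_dividef field_simps)
  also have "\<dots> = rfun_scalar q p n N m z * Kfun \<alpha> \<beta> h n z"
    using gauge_identity[OF assms(1,2) powrs] rfun_gauge_nonzero unfolding g_def by simp
  finally show ?thesis .
qed

end

theorem proposition3p4:
  fixes n N :: nat and q p :: real and t12 :: complex and pos :: bool
    and d :: "nat \<Rightarrow> nat" and c :: "nat \<Rightarrow> complex"
    and f :: "nat list \<Rightarrow> (nat \<Rightarrow> complex) \<Rightarrow> complex"
    and C \<alpha> \<beta> :: complex and h :: "complex \<Rightarrow> complex"
  assumes "2 \<le> N" and "N \<le> n" and "0 < q" and "q < 1" and "0 < p" and "t12 \<noteq> 0"
    and "\<forall>j<N. 0 < d j" and "(\<Sum>j<N. d j) = n"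
    and "qKZ_family pos t12 p n N d c f"
    and "if pos then t12 = of_real q else of_real q = - inverse t12"
    and "(\<Prod>l<N. c l) \<noteq> 0"
    and "C ^ N = (\<Prod>l<N. c l)"
    and "if pos then
           of_real p powr \<alpha> = inverse C * of_real (q powr (- (real n + 1) * (1 / real N - 1)))
         \<and> of_real p powr \<beta> = of_real (q powr (2 * (1 / real N - 1)))
         else
           of_real p powr \<alpha> = (-1) ^ (n - 1) * inverse C * of_real (q powr (- (real n + 1) * (1 + 1 / real N)))
         \<and> of_real p powr \<beta> = of_real (q powr (2 * (1 + 1 / real N)))"
    and "\<forall>z. good q z \<longrightarrow> h (z / of_real p) / h z = h_num q N z / h_den pos q N z"
  shows "qKZ_solution q p n N (kappa c C) (Gfun \<alpha> \<beta> h n N d f)"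
proof -
  interpret qKZ_solution_data n N q p t12 pos d c f C
    by unfold_locales (use assms in auto)
  have G: "Gfun \<alpha> \<beta> h n N d f y = scale_tvec (Kfun \<alpha> \<beta> h n y) (F y)" for y
    unfolding Gfun_def scale_tvec_def ..
  show ?thesis
    unfolding qKZ_solution_def
  proof (intro allI impI)
    fix m z
    assume m: "m < n" and z: "generic q p n z"
    have "Gfun \<alpha> \<beta> h n N d f (z(m := of_real p * z m))
        = scale_tvec (Kfun \<alpha> \<beta> h n (z(m := of_real p * z m)) * (C * exch_scalar m z))
            (qKZ_op_bar q p n N (kappa c C) m z (F z))"
      unfolding G Ffun_shift[OF m z] by simp
    also have "\<dots>
        = scale_tvec (rfun_scalar q p n N m z)
          (qKZ_op_bar q p n N (kappa c C) m z (Gfun \<alpha> \<beta> h n N d f z))"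
      unfolding Kfun_fun_upd_mult_exch_scalar[OF assms(5) m z assms(14,13)] G
      by (simp add: qKZ_op_bar_scale_tvec Ffun_in_tvecs mult.commute)
    also have "\<dots> = qKZ_op q p n N (kappa c C) m z (Gfun \<alpha> \<beta> h n N d f z)"
      unfolding G using qKZ_op_conv_qKZ_op_bar[OF q_pos q_less_1 N_pos m z]
      by (simp add: scale_tvec_in_tvecs Ffun_in_tvecs)
    finally show "Gfun \<alpha> \<beta> h n N d f (z(m := of_real p * z m))
        = qKZ_op q p n N (kappa c C) m z (Gfun \<alpha> \<beta> h n N d f z)" .
  qed
qed

end
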